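(* On $T^*(\mathbb R^\ell\times\mathbb T)$ with coordinates $(q,\phi;p,\gamma)$ consider $$H(q,\phi;p,\gamma)=\tfrac12\big(p\cdot p+2\gamma\,a(q,\phi)\cdot p+h(q,\phi)\gamma^2\big)+U(q,\phi),$$ $2\pi$-periodic in $\phi$, with $a=a_0(q)+\epsilon a_1(q,\phi)$, $h=h_0(q)+\epsilon h_1(q,\phi)$, $U=U_0(q)+\epsilon U_1(q,\phi)$, where $a_1,h_1,U_1$ have zero mean in $\phi$. Consider the system (Hamiltonian for $\omega=\frac1\epsilon dq\wedge dp+d\phi\wedge d\gamma$) $$\dot q=\epsilon(p+\gamma a),\quad \dot\phi=a\cdot p+h\gamma,\quad \dot p=-\epsilon\,\partial_q\big(\gamma a\cdot p+\tfrac12h\gamma^2+U\big),\quad \dot\gamma=-\epsilon\,\partial_\phi\big(\gamma a_1\cdot p+\tfrac12 h_1\gamma^2+U_1\big),$$ and the averaged system for $\bar H(Q,P,\mu)=\tfrac12P\cdot P+\mu\,a_0(Q)\cdot P+\tfrac12\mu^2h_0(Q)+U_0(Q)$: $$\dot Q=\epsilon(P+\mu a_0(Q)),\quad \dot P=-\epsilon\,\partial_Q\big(\mu a_0(Q)\cdot P+\tfrac12h_0(Q)\mu^2+U_0(Q)\big),\quad\dot\mu=0.$$ Assume the data are $C^3$-bounded on $D\times\mathbb T$ for a domain $D\subset\mathbb R^{2\ell+1}$ of $(q,p,\gamma)$, that the fast frequency satisfies $a\cdot p+h\gamma>C>0$ there, and that the averaged solution $(Q(t),P(t),\mu)$ stays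 in a subdomain $D_\delta$ whose $\delta$-neighbourhood lies in $D$ for $0\le t\le1/\epsilon$. Then there exist $\epsilon_0>0$ and $C_0$ independent of $\epsilon$ such that for $0<\epsilon<\epsilon_0$, solutions with equal initial data $(q(0),p(0),\gamma(0))=(Q(0),P(0),\mu)$ satisfy $|\gamma(t)-\mu|+|q(t)-Q(t)|+|p(t)-P(t)|<C_0\epsilon$ for all $0\le t\le1/\epsilon$.
   Context: Dot denotes the Euclidean inner product on $\mathbb R^\ell$ and also the time derivative; $\mathbb T=S^1=\mathbb R/2\pi\mathbb Z$. *)

theory Defs
  imports "HOL-Analysis.Analysis"
begin

definition C3_bounded_on ::
  "('a::real_normed_vector) set \<Rightarrow> ('a \<Rightarrow> 'b::real_normed_vector) \<Rightarrow> bool" where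
  "C3_bounded_on S f \<longleftrightarrow>
     (\<exists>D1 D2 D3.
        (\<forall>x\<in>S. (f has_derivative blinfun_apply (D1 x)) (at x)) \<and>
        (\<forall>x\<in>S. (D1 has_derivative blinfun_apply (D2 x)) (at x)) \<and>
        (\<forall>x\<in>S. (D2 has_derivative blinfun_apply (D3 x)) (at x)) \<and>
        continuous_on S D3 \<and>
        bounded (f ` S) \<and> bounded (D1 ` S) \<and> bounded (D2 ` S) \<and> bounded (D3 ` S))"

definition pert :: "real \<Rightarrow> ('a \<Rightarrow> 'b::real_vector) \<Rightarrow> ('a \<Rightarrow> real \<Rightarrow> 'b) \<Rightarrow> 'a \<Rightarrow> real \<Rightarrow> 'b" where
  "pert eps f0 f1 q \<phi> = f0 q + eps *\<^sub>R f1 q \<phi>"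

definition full_sol ::
  "real \<Rightarrow> ('a::euclidean_space \<Rightarrow> 'a) \<Rightarrow> ('a \<Rightarrow> real \<Rightarrow> 'a) \<Rightarrow>
   ('a \<Rightarrow> real) \<Rightarrow> ('a \<Rightarrow> real \<Rightarrow> real) \<Rightarrow> ('a \<Rightarrow> real) \<Rightarrow> ('a \<Rightarrow> real \<Rightarrow> real) \<Rightarrow>
   (real \<Rightarrow> 'a) \<Rightarrow> (real \<Rightarrow> real) \<Rightarrow> (real \<Rightarrow> 'a) \<Rightarrow> (real \<Rightarrow> real) \<Rightarrow> bool" where
  "full_sol eps a0 a1 h0 h1 U0 U1 q \<phi> p \<gamma> \<longleftrightarrow>
     (\<forall>t\<in>{0..1/eps}.
        let a = pert eps a0 a1; h = pert eps h0 h1; U = pert eps U0 U1 in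
        (q has_vector_derivative
            eps *\<^sub>R (p t + \<gamma> t *\<^sub>R a (q t) (\<phi> t))) (at t within {0..1/eps}) \<and>
        (\<phi> has_vector_derivative
            (a (q t) (\<phi> t) \<bullet> p t + h (q t) (\<phi> t) * \<gamma> t)) (at t within {0..1/eps}) \<and>
        (\<exists>g. GDERIV (\<lambda>x. \<gamma> t * (a x (\<phi> t) \<bullet> p t) + (1/2) * h x (\<phi> t) * (\<gamma> t)\<^sup>2
                          + U x (\<phi> t)) (q t) :> g \<and>
             (p has_vector_derivative (- eps) *\<^sub>R g) (at t within {0..1/eps})) \<and>
        (\<exists>d. ((\<lambda>\<psi>. \<gamma> t * (a1 (q t) \<psi> \<bullet> p t) + (1/2) * h1 (q t) \<psi> * (\<gamma> t)\<^sup>2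
                          + U1 (q t) \<psi>) has_real_derivative d) (at (\<phi> t)) \<and>
             (\<gamma> has_vector_derivative (- eps * d)) (at t within {0..1/eps})))"

definition avg_sol ::
  "real \<Rightarrow> ('a::euclidean_space \<Rightarrow> 'a) \<Rightarrow> ('a \<Rightarrow> real) \<Rightarrow> ('a \<Rightarrow> real) \<Rightarrow>
   (real \<Rightarrow> 'a) \<Rightarrow> (real \<Rightarrow> 'a) \<Rightarrow> real \<Rightarrow> bool" where
  "avg_sol eps a0 h0 U0 Q P \<mu> \<longleftrightarrow>
     (\<forall>t\<in>{0..1/eps}.
        (Q has_vector_derivative eps *\<^sub>R (P t + \<mu> *\<^sub>R a0 (Q t))) (at t within {0..1/eps}) \<and>
        (\<exists>g. GDERIV (\<lambda>x. \<mu> * (a0 x \<bullet> P t) + (1/2) * h0 x * \<mu>\<^sup>2 + U0 x) (Q t) :> g \<and>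
             (P has_vector_derivative (- eps) *\<^sub>R g) (at t within {0..1/eps})))"

end

(*
  The slow variables (q, p) of the full system differ from those of the averaged system only by
  terms of order eps^2: the phi-dependent parts of a, h and U carry an extra factor eps.  Hence
  Gronwall's inequality bounds |q - Q| + |p - P| by O(eps) on [0, 1/eps], provided |gamma - mu| = O(eps).
  The action gamma is not slow enough for a direct estimate, since gamma' = - eps d_phi G with
  G = gamma a1.p + h1 gamma^2 / 2 + U1.  But phi' = Om > C, so the near-identity variable
  W = gamma + eps G / Om satisfies W' = O(eps^2), which gives gamma - mu = O(eps).  All bounds hold
  as long as the full solution stays delta-close to the averaged one, and for small eps a
  continuity argument shows that it never leaves.
*)

theory Submission
  imports Defs
begin

lemma norm_increment_le_integral:
  fixes f :: "real \<Rightarrow> 'b::euclidean_space"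
  assumes "0 \<le> t"
    and "\<And>s. s \<in> {0..t} \<Longrightarrow> (f has_vector_derivative f' s) (at s within {0..t})"
    and "continuous_on {0..t} g" "\<And>s. s \<in> {0..t} \<Longrightarrow> norm (f' s) \<le> g s"
  shows "norm (f t - f 0) \<le> integral {0..t} g"
proof -
  have f': "(f' has_integral (f t - f 0)) {0..t}"
    by (rule fundamental_theorem_of_calculus) (use assms in auto)
  have "norm (integral {0..t} f') \<le> integral {0..t} g"
    by (rule integral_norm_bound_integral) (use f' assms integrable_continuous_interval in auto)
  then show ?thesis using f' by (simp add: integral_unique)
qed

lemma norm_increment_le_const:
  fixes f :: "real \<Rightarrow> 'b::euclidean_space"
  assumes "0 \<le> t"
    and "\<And>s. s \<in> {0..t} \<Longrightarrow> (f has_vector_derivative f' s) (at s within {0..t})"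
    and "\<And>s. s \<in> {0..t} \<Longrightarrow> norm (f' s) \<le> B"
  shows "norm (f t - f 0) \<le> B * t"
  using norm_increment_le_integral[of t f f' "\<lambda>_. B"] assms by (simp add: mult.commute)

lemma integral_affine_comp:
  fixes f :: "real \<Rightarrow> real"
  assumes "0 \<le> s" "continuous_on {0..s} f"
  shows "integral {0..s} (\<lambda>x. a * (b * f x + c)) = a * b * integral {0..s} f + a * c * s"
proof -
  have f: "f integrable_on {0..s}" using assms(2) integrable_continuous_interval by blast
  have "integral {0..s} (\<lambda>x. a * (b * f x + c)) = integral {0..s} (\<lambda>x. (a * b) * f x + a * c)"
    by (simp add: algebra_simps)
  also have "\<dots> = a * b * integral {0..s} f + a * c * s"
    using integrable_on_cmult_left[OF f, of "a * b"] assms(1) by (subst integral_add) auto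
  finally show ?thesis .
qed

lemma gronwall_integral:
  fixes e :: "real \<Rightarrow> real"
  assumes "0 \<le> t" "continuous_on {0..t} e" "0 \<le> L"
    and "\<And>s. s \<in> {0..t} \<Longrightarrow> e s \<le> A + L * integral {0..s} e"
  shows "e t \<le> A * exp (L * t)"
proof -
  define I where "I s = integral {0..s} e" for s
  have dI: "(I has_vector_derivative e s) (at s within {0..t})" if "s \<in> {0..t}" for s
    unfolding I_def by (rule integral_has_vector_derivative) (use assms that in auto)
  \<comment> \<open>the integrating factor makes K nonincreasing\<close>
  define K where "K s = exp (- L * s) * (A + L * I s)" for s
  define K' where "K' s = exp (- L * s) * (L * (e s - (A + L * I s)))" for s
  have dK: "(K has_vector_derivative K' s) (at s within {0..t})" if "s \<in> {0..t}" for s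
  proof -
    have d1: "((\<lambda>s. exp (- L * s)) has_vector_derivative exp (- L * s) * (- L)) (at s within {0..t})"
      unfolding has_real_derivative_iff_has_vector_derivative[symmetric]
      by (auto intro!: derivative_eq_intros)
    have d2: "((\<lambda>s. A + L * I s) has_vector_derivative L * e s) (at s within {0..t})"
      using dI[OF that] by (auto intro!: derivative_eq_intros)
    from has_vector_derivative_mult[OF d1 d2] show ?thesis unfolding K_def K'_def
      by (rule has_vector_derivative_eq_rhs) (simp add: algebra_simps)
  qed
  have "(K' has_integral (K t - K 0)) {0..t}"
    by (rule fundamental_theorem_of_calculus) (use assms(1) dK in auto)
  moreover have "((\<lambda>s. 0::real) has_integral 0) {0..t}" by simp
  moreover have "K' s \<le> 0" if "s \<in> {0..t}" for s
  proof -
    have "L * (e s - (A + L * I s)) \<le> 0"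
      using assms(4)[OF that] assms(3) by (simp add: I_def mult_nonneg_nonpos)
    then show ?thesis unfolding K'_def by (simp add: mult_nonneg_nonpos)
  qed
  ultimately have "K t - K 0 \<le> 0" using has_integral_le by blast
  then have "A + L * I t \<le> A * exp (L * t)"
    by (simp add: K_def I_def exp_minus field_simps)
  moreover have "e t \<le> A + L * I t" using assms(1,4) by (simp add: I_def)
  ultimately show ?thesis by simp
qed

lemma continuity_argument:
  fixes e :: "real \<Rightarrow> real"
  assumes "continuous_on {0..T} e" "e 0 < c"
    and improve: "\<And>t. t \<in> {0..T} \<Longrightarrow> \<forall>s\<in>{0..t}. e s \<le> c \<Longrightarrow> e t < c"
  shows "\<forall>t\<in>{0..T}. e t \<le> c"
proof (rule ccontr)
  assume "\<not> ?thesis"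
  then obtain t where t: "t \<in> {0..T}" "e t > c" by force
  have ct: "continuous_on {0..t} e" using assms(1) t by (auto intro: continuous_on_subset)
  define Z where "Z = {s \<in> {0..t}. e s = c}"
  have "closed Z" unfolding Z_def by (rule continuous_closed_preimage_constant[OF ct]) simp
  have "\<exists>x\<ge>0. x \<le> t \<and> e x = c" by (rule IVT') (use t assms ct in auto)
  then have "Z \<noteq> {}" unfolding Z_def by auto
  have bZ: "bdd_below Z" unfolding Z_def by (auto intro: bdd_belowI[of _ 0])
  define t1 where "t1 = Inf Z"
  have t1Z: "t1 \<in> Z"
    unfolding t1_def by (rule closed_contains_Inf) fact+
  have "e s \<le> c" if s: "s \<in> {0..t1}" for s
  proof (rule ccontr)
    assume "\<not> e s \<le> c"
    have "\<exists>x\<ge>0. x \<le> s \<and> e x = c"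
      by (rule IVT') (use \<open>\<not> e s \<le> c\<close> s t1Z assms ct in \<open>auto simp: Z_def intro: continuous_on_subset\<close>)
    then obtain x where "0 \<le> x" "x \<le> s" "e x = c" by blast
    then have "x \<in> Z" using s t1Z unfolding Z_def by auto
    then have "x = s" using cInf_lower[OF _ bZ, of x] \<open>x \<le> s\<close> s unfolding t1_def by auto
    then show False using \<open>e x = c\<close> \<open>\<not> e s \<le> c\<close> by simp
  qed
  then have "e t1 < c" using improve[of t1] t1Z t unfolding Z_def by auto
  then show False using t1Z unfolding Z_def by simp
qed

lemma gderiv_norm_diff_le:
  assumes "GDERIV f x :> g" "(f has_derivative F) (at x)"
    and "GDERIV f' y :> g'" "(f' has_derivative F') (at y)"
    and "\<And>v. \<bar>F v - F' v\<bar> \<le> B * norm v" "0 \<le> B"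
  shows "norm (g - g') \<le> B"
proof -
  have "F = (\<lambda>h. h \<bullet> g)" "F' = (\<lambda>h. h \<bullet> g')"
    using has_derivative_unique assms(1-4) unfolding gderiv_def by blast+
  then have "\<bar>(g - g') \<bullet> (g - g')\<bar> \<le> B * norm (g - g')"
    using assms(5)[of "g - g'"] by (simp add: inner_diff_right)
  then have "norm (g - g') * norm (g - g') \<le> B * norm (g - g')"
    by (simp add: power2_norm_eq_inner[symmetric] power2_eq_square)
  then show ?thesis using assms(6)
    by (metis mult_right_le_imp_le norm_ge_zero order.strict_iff_order mult_zero_right order_refl)
qed

lemma norm_diff_le_of_blinfun_derivative_bound:
  assumes "convex S" "\<And>x. x \<in> S \<Longrightarrow> (f has_derivative blinfun_apply (F x)) (at x)"
    and "\<And>x. x \<in> S \<Longrightarrow> norm (F x) \<le> B" "x \<in> S" "y \<in> S"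
  shows "norm (f y - f x) \<le> B * norm (y - x)"
proof (rule differentiable_bound[where f'="\<lambda>x. blinfun_apply (F x)"])
  fix z assume "z \<in> S"
  then show "(f has_derivative blinfun_apply (F z)) (at z within S)"
    using assms(2) has_derivative_at_withinI by blast
  show "onorm (blinfun_apply (F z)) \<le> B"
    using assms(3) \<open>z \<in> S\<close> by (simp add: norm_blinfun.rep_eq[symmetric])
qed (use assms in auto)

lemma has_derivative_partial_fst:
  assumes "(case_prod f has_derivative F) (at (x, y))"
  shows "((\<lambda>x. f x y) has_derivative (\<lambda>v. F (v, 0))) (at x within s)"
proof -
  have "((\<lambda>x. (x, y)) has_derivative (\<lambda>v. (v, 0))) (at x within s)"
    by (auto intro!: derivative_eq_intros)
  from has_derivative_compose[OF this assms] show ?thesis by simp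
qed

lemma has_vector_derivative_partial_snd:
  assumes "(case_prod f has_derivative F) (at (x, y))"
  shows "((\<lambda>y. f x y) has_vector_derivative F (0, 1)) (at y within s)"
proof -
  have "((\<lambda>y. (x, y)) has_derivative (\<lambda>v. (0, v))) (at y within s)"
    by (auto intro!: derivative_eq_intros)
  from has_derivative_compose[OF this assms]
  have "((\<lambda>y. f x y) has_derivative (\<lambda>v. F (0, v))) (at y within s)" by simp
  moreover have "(\<lambda>v. F (0, v)) = (\<lambda>v. v *\<^sub>R F (0, 1))"
  proof
    fix v :: real
    have "F (0, v) = F (v *\<^sub>R (0, 1))" by simp
    also have "\<dots> = v *\<^sub>R F (0, 1)" using has_derivative_linear[OF assms] linear_scale by blast
    finally show "F (0, v) = v *\<^sub>R F (0, 1)" .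
  qed
  ultimately show ?thesis by (simp add: has_vector_derivative_def)
qed

lemma has_vector_derivative_compose_at:
  assumes "(f has_derivative F) (at (x t))" "(x has_vector_derivative x') (at t within T)"
  shows "((\<lambda>s. f (x s)) has_vector_derivative F x') (at t within T)"
proof -
  have "(x has_derivative (\<lambda>h. h *\<^sub>R x')) (at t within T)"
    using assms(2) by (simp add: has_vector_derivative_def)
  from has_derivative_compose[OF this assms(1)]
  have "((\<lambda>s. f (x s)) has_derivative (\<lambda>h. F (h *\<^sub>R x'))) (at t within T)" by simp
  moreover have "(\<lambda>h. F (h *\<^sub>R x')) = (\<lambda>h. h *\<^sub>R F x')"
    using has_derivative_linear[OF assms(1)] linear_scale by blast
  ultimately show ?thesis by (simp add: has_vector_derivative_def)
qed

lemma has_vector_derivative_compose2_at: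
  assumes "(case_prod f has_derivative F) (at (x t, y t))"
    and "(x has_vector_derivative x') (at t within T)" "(y has_vector_derivative y') (at t within T)"
  shows "((\<lambda>s. f (x s) (y s)) has_vector_derivative F (x', y')) (at t within T)"
  using has_vector_derivative_compose_at[of "case_prod f" F "\<lambda>s. (x s, y s)", OF assms(1)
      has_vector_derivative_Pair[OF assms(2,3)]] by simp

lemma has_field_derivative_inner:
  assumes "(f has_vector_derivative f') (at t within T)" "(g has_vector_derivative g') (at t within T)"
  shows "((\<lambda>s. f s \<bullet> g s) has_field_derivative (f t \<bullet> g' + f' \<bullet> g t)) (at t within T)"
  unfolding has_real_derivative_iff_has_vector_derivative
  by (rule bounded_bilinear.has_vector_derivative[OF bounded_bilinear_inner assms])

lemma blinfun_apply_Pair_split: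
  "blinfun_apply F (v, w) = blinfun_apply F (v, 0) + w *\<^sub>R blinfun_apply F (0, 1)"
proof -
  have "(v, w) = (v, 0) + w *\<^sub>R (0, 1)" by simp
  then show ?thesis by (metis blinfun.add_right blinfun.scaleR_right)
qed

lemma norm_blinfun_apply_le: "norm F \<le> M \<Longrightarrow> norm v \<le> V \<Longrightarrow> norm (blinfun_apply F v) \<le> M * V"
  by (meson norm_blinfun norm_ge_zero mult_mono order_trans)

lemma abs_inner_le_mult: "norm x \<le> X \<Longrightarrow> norm y \<le> Y \<Longrightarrow> \<bar>x \<bullet> y\<bar> \<le> X * Y"
  by (meson Cauchy_Schwarz_ineq2 mult_mono norm_ge_zero order_trans)

lemma abs_mult_le_mult: "\<bar>x::real\<bar> \<le> X \<Longrightarrow> \<bar>y\<bar> \<le> Y \<Longrightarrow> \<bar>x * y\<bar> \<le> X * Y"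
  by (simp add: abs_mult mult_mono')

lemma norm_scaleR_le_mult: "\<bar>x::real\<bar> \<le> X \<Longrightarrow> norm y \<le> Y \<Longrightarrow> norm (x *\<^sub>R y) \<le> X * Y"
  by (simp add: mult_mono')

lemma abs_sum5_le:
  fixes a b c d e :: real
  assumes "\<bar>a\<bar> \<le> A" "\<bar>b\<bar> \<le> B" "\<bar>c\<bar> \<le> C" "\<bar>d\<bar> \<le> D" "\<bar>e\<bar> \<le> E"
  shows "\<bar>a + b + 1/2 * (c + d) + e\<bar> \<le> A + B + 1/2 * (C + D) + E"
proof -
  have "\<bar>c + d\<bar> \<le> C + D" using assms(3,4) abs_triangle_ineq[of c d] by linarith
  then have "\<bar>1/2 * (c + d)\<bar> \<le> 1/2 * (C + D)" by (simp add: abs_mult)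
  then show ?thesis using assms(1,2,5) abs_triangle_ineq[of "a + b + 1/2 * (c + d)" e]
    abs_triangle_ineq[of "a + b" "1/2 * (c + d)"] abs_triangle_ineq[of a b] by linarith
qed

lemma abs_sum4_le:
  fixes a b c d :: real
  assumes "\<bar>a\<bar> \<le> A" "\<bar>b\<bar> \<le> B" "\<bar>c\<bar> \<le> C" "\<bar>d\<bar> \<le> D"
  shows "\<bar>a + b + (c + d)\<bar> \<le> A + B + C + D"
  using assms abs_triangle_ineq[of "a + b" "c + d"] abs_triangle_ineq[of a b] abs_triangle_ineq[of c d]
  by linarith

lemma C3_bounded_onE:
  assumes "C3_bounded_on S f"
  obtains D1 D2 B where "\<And>x. x \<in> S \<Longrightarrow> (f has_derivative blinfun_apply (D1 x)) (at x)"
    "\<And>x. x \<in> S \<Longrightarrow> (D1 has_derivative blinfun_apply (D2 x)) (at x)" "0 \<le> B"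
    "\<And>x. x \<in> S \<Longrightarrow> norm (f x) \<le> B \<and> norm (D1 x) \<le> B \<and> norm (D2 x) \<le> B"
proof -
  from assms obtain D1 D2 D3 where D: "\<forall>x\<in>S. (f has_derivative blinfun_apply (D1 x)) (at x)"
    "\<forall>x\<in>S. (D1 has_derivative blinfun_apply (D2 x)) (at x)"
    "bounded (f ` S)" "bounded (D1 ` S)" "bounded (D2 ` S)"
    unfolding C3_bounded_on_def by blast
  from D(3-5) obtain b1 b2 b3 where "\<forall>x\<in>S. norm (f x) \<le> b1" "\<forall>x\<in>S. norm (D1 x) \<le> b2" "\<forall>x\<in>S. norm (D2 x) \<le> b3"
    by (auto simp: bounded_iff)
  then show ?thesis using D(1,2) by (intro that[of D1 D2 "max 0 (max b1 (max b2 b3))"]) fastforce+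
qed

locale averaging_data =
  fixes a0 :: "'a::euclidean_space \<Rightarrow> 'a" and a1 :: "'a \<Rightarrow> real \<Rightarrow> 'a"
    and h0 U0 :: "'a \<Rightarrow> real" and h1 U1 :: "'a \<Rightarrow> real \<Rightarrow> real"
    and D Dd :: "('a \<times> 'a \<times> real) set"
    and \<delta> C \<mu> M :: real and P0 :: 'a
    and A1 :: "'a \<Rightarrow> 'a \<Rightarrow>\<^sub>L 'a" and A2 :: "'a \<Rightarrow> 'a \<Rightarrow>\<^sub>L 'a \<Rightarrow>\<^sub>L 'a"
    and H1 V1 :: "'a \<Rightarrow> 'a \<Rightarrow>\<^sub>L real" and H2 V2 :: "'a \<Rightarrow> 'a \<Rightarrow>\<^sub>L 'a \<Rightarrow>\<^sub>L real"
    and B1 :: "'a \<times> real \<Rightarrow> ('a \<times> real) \<Rightarrow>\<^sub>L 'a"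
    and K1 W1 :: "'a \<times> real \<Rightarrow> ('a \<times> real) \<Rightarrow>\<^sub>L real"
  assumes dA: "\<And>x. x \<in> fst ` D \<Longrightarrow> (a0 has_derivative blinfun_apply (A1 x)) (at x)"
    and dA2: "\<And>x. x \<in> fst ` D \<Longrightarrow> (A1 has_derivative blinfun_apply (A2 x)) (at x)"
    and dH: "\<And>x. x \<in> fst ` D \<Longrightarrow> (h0 has_derivative blinfun_apply (H1 x)) (at x)"
    and dH2: "\<And>x. x \<in> fst ` D \<Longrightarrow> (H1 has_derivative blinfun_apply (H2 x)) (at x)"
    and dV: "\<And>x. x \<in> fst ` D \<Longrightarrow> (U0 has_derivative blinfun_apply (V1 x)) (at x)"
    and dV2: "\<And>x. x \<in> fst ` D \<Longrightarrow> (V1 has_derivative blinfun_apply (V2 x)) (at x)"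
    and dB: "\<And>x y. x \<in> fst ` D \<Longrightarrow> (case_prod a1 has_derivative blinfun_apply (B1 (x, y))) (at (x, y))"
    and dK: "\<And>x y. x \<in> fst ` D \<Longrightarrow> (case_prod h1 has_derivative blinfun_apply (K1 (x, y))) (at (x, y))"
    and dW: "\<And>x y. x \<in> fst ` D \<Longrightarrow> (case_prod U1 has_derivative blinfun_apply (W1 (x, y))) (at (x, y))"
    and bA: "\<And>x. x \<in> fst ` D \<Longrightarrow> norm (a0 x) \<le> M \<and> norm (A1 x) \<le> M \<and> norm (A2 x) \<le> M"
    and bH: "\<And>x. x \<in> fst ` D \<Longrightarrow> \<bar>h0 x\<bar> \<le> M \<and> norm (H1 x) \<le> M \<and> norm (H2 x) \<le> M"
    and bV: "\<And>x. x \<in> fst ` D \<Longrightarrow> \<bar>U0 x\<bar> \<le> M \<and> norm (V1 x) \<le> M \<and> norm (V2 x) \<le> M"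
    and bB: "\<And>x y. x \<in> fst ` D \<Longrightarrow> norm (a1 x y) \<le> M \<and> norm (B1 (x, y)) \<le> M"
    and bK: "\<And>x y. x \<in> fst ` D \<Longrightarrow> \<bar>h1 x y\<bar> \<le> M \<and> norm (K1 (x, y)) \<le> M"
    and bW: "\<And>x y. x \<in> fst ` D \<Longrightarrow> \<bar>U1 x y\<bar> \<le> M \<and> norm (W1 (x, y)) \<le> M"
    and M_nonneg: "0 \<le> M" and \<delta>_pos: "0 < \<delta>" and C_pos: "0 < C"
    and nbhd: "\<forall>x\<in>Dd. ball x \<delta> \<subseteq> D" and Dd_subset: "Dd \<subseteq> D"
begin

abbreviation "S \<equiv> fst ` D"

text \<open>The constants of the estimates; none of them depends on \<open>\<epsilon>\<close>.
  \<open>RP\<close> bounds the averaged momentum \<open>P\<close>; \<open>Rp\<close> and \<open>Rg\<close> bound \<open>p\<close> and \<open>\<gamma>\<close> while the full solution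
  stays \<open>\<delta>\<close>-close to the averaged one. \<open>Lq\<close>, \<open>\<bar>\<mu>\<bar> * M\<close>, \<open>Lg\<close> are Lipschitz constants of the
  \<open>q\<close>-gradient of the Hamiltonian in \<open>q\<close>, \<open>p\<close>, \<open>\<gamma>\<close>; \<open>DG\<close> bounds the fast part \<open>G\<close> and its
  \<open>\<phi>\<close>-derivative; \<open>\<epsilon> * Vq\<close>, \<open>\<epsilon> * Vp\<close>, \<open>VOm\<close> bound \<open>q'\<close>, \<open>p'\<close> and the frequency \<open>Om\<close>.
  \<open>\<epsilon> * KE\<close> and \<open>\<epsilon> * KOm\<close> bound the slow part of \<open>G'\<close> and \<open>Om'\<close>, whence \<open>\<bar>W'\<bar> \<le> \<epsilon>\<^sup>2 * KW\<close> and
  \<open>\<bar>\<gamma> - \<mu>\<bar> \<le> \<epsilon> * Kgam\<close>; \<open>Lc\<close> and \<open>\<epsilon> * K2\<close> are the rate and the forcing in Gronwall's inequality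
  for \<open>q\<close> and \<open>p\<close>.\<close>

definition "cP = 1/2 * \<mu>\<^sup>2 * M + M"
definition "RP = (norm P0 + cP) * exp (\<bar>\<mu>\<bar> * M)"
definition "Rp = RP + \<delta>"
definition "Rg = \<bar>\<mu>\<bar> + \<delta>"
definition "Lq = \<bar>\<mu>\<bar> * M * Rp + 1/2 * M * Rg\<^sup>2 + M"
definition "Lg = M * Rp + 1/2 * M * (Rg + \<bar>\<mu>\<bar>)"
definition "DG = Rg * M * Rp + 1/2 * M * Rg\<^sup>2 + M"
definition "Vq = Rp + Rg * (2 * M)"
definition "VOm = 2 * M * Rp + 2 * M * Rg"
definition "Vp = \<bar>\<mu>\<bar> * M * RP + cP + Lq * \<delta> + \<bar>\<mu>\<bar> * M * \<delta> + Lg * \<delta> + DG"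
definition "KE = DG * (M * Rp) + Rg * (M * Vp + M * Vq * Rp) + 1/2 * (M * Vq * Rg\<^sup>2 + M * (2 * Rg * DG)) + M * Vq"
definition "KOm = 2 * M * Vp + (M * Vq + M * (Vq + VOm)) * Rp + (M * Vq + M * (Vq + VOm)) * Rg + 2 * M * DG"
definition "KW = KE / C + DG * KOm / C\<^sup>2"
definition "Kgam = KW + 2 * (DG / C)"
definition "Lc = 1 + \<bar>\<mu>\<bar> * M + Lq"
definition "K2 = (M + Lg) * Kgam + Rg * M + DG"
definition "Kerr = Kgam + 2 * K2 * exp (2 * Lc)"

lemma constants_nonneg:
  "0 \<le> cP" "0 \<le> RP" "0 \<le> Rp" "0 \<le> Rg" "0 \<le> Lq" "0 \<le> Lg" "0 \<le> DG" "0 \<le> Vq" "0 \<le> VOm" "0 \<le> Vp"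
proof -
  note M = M_nonneg and \<delta> = less_imp_le[OF \<delta>_pos]
  show cP: "0 \<le> cP" unfolding cP_def using M by simp
  show RP: "0 \<le> RP" unfolding RP_def using cP by simp
  show Rp: "0 \<le> Rp" unfolding Rp_def using RP \<delta> by simp
  show Rg: "0 \<le> Rg" unfolding Rg_def using \<delta> by simp
  show Lq: "0 \<le> Lq" unfolding Lq_def using M Rp by simp
  show Lg: "0 \<le> Lg" unfolding Lg_def using M Rp Rg by simp
  show DG: "0 \<le> DG" unfolding DG_def using M Rp Rg by simp
  show "0 \<le> Vq" unfolding Vq_def using M Rp Rg by simp
  show "0 \<le> VOm" unfolding VOm_def using M Rp Rg by simp
  show "0 \<le> Vp" unfolding Vp_def using M RP cP Lq Lg DG \<delta> by simp
qed

lemma KW_nonneg: "0 \<le> KW"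
  unfolding KW_def KE_def KOm_def using constants_nonneg M_nonneg C_pos by simp

lemma error_constants_nonneg: "0 \<le> Kgam" "0 \<le> Lc" "0 \<le> K2" "0 \<le> Kerr"
proof -
  note nn = M_nonneg constants_nonneg
  show Kgam: "0 \<le> Kgam"
    unfolding Kgam_def using KW_nonneg divide_nonneg_pos[OF nn(8) C_pos] by simp
  show "0 \<le> Lc" unfolding Lc_def using nn(1,6) by simp
  show K2: "0 \<le> K2" unfolding K2_def
    by (intro add_nonneg_nonneg mult_nonneg_nonneg) (use Kgam nn(1,5,7,8) in auto)
  show "0 \<le> Kerr" unfolding Kerr_def using Kgam K2 by simp
qed

lemma has_derivative_full_hamiltonian: "x \<in> S \<Longrightarrow>
  ((\<lambda>x. g * (pert \<epsilon> a0 a1 x \<psi> \<bullet> pp) + (1/2) * pert \<epsilon> h0 h1 x \<psi> * g\<^sup>2 + pert \<epsilon> U0 U1 x \<psi>) has_derivative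
   (\<lambda>v. g * ((A1 x v + \<epsilon> *\<^sub>R B1 (x, \<psi>) (v, 0)) \<bullet> pp) + 1/2 * (H1 x v + \<epsilon> * K1 (x, \<psi>) (v, 0)) * g\<^sup>2
      + (V1 x v + \<epsilon> * W1 (x, \<psi>) (v, 0)))) (at x)"
  unfolding pert_def
  by (auto intro!: derivative_eq_intros dA dH dV has_derivative_partial_fst[OF dB]
      has_derivative_partial_fst[OF dK] has_derivative_partial_fst[OF dW])

lemma hamiltonian_derivative_diff_bound:
  assumes x: "x \<in> S" and X: "X \<in> S" and \<epsilon>: "0 \<le> \<epsilon>"
    and lip: "norm (A1 x - A1 X) \<le> M * norm (x - X)" "norm (H1 x - H1 X) \<le> M * norm (x - X)"
      "norm (V1 x - V1 X) \<le> M * norm (x - X)"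
    and pp: "norm pp \<le> Rp" and g: "\<bar>g\<bar> \<le> Rg"
  shows "\<bar>g * ((A1 x v + \<epsilon> *\<^sub>R B1 (x, \<psi>) (v, 0)) \<bullet> pp) + 1/2 * (H1 x v + \<epsilon> * K1 (x, \<psi>) (v, 0)) * g\<^sup>2
      + (V1 x v + \<epsilon> * W1 (x, \<psi>) (v, 0)) - (\<mu> * (A1 X v \<bullet> PP) + 1/2 * H1 X v * \<mu>\<^sup>2 + V1 X v)\<bar>
    \<le> (Lq * norm (x - X) + (\<bar>\<mu>\<bar> * M) * norm (pp - PP) + Lg * \<bar>g - \<mu>\<bar> + \<epsilon> * DG) * norm v"
proof -
  define nv where "nv = norm v"
  define a where "a = A1 x v"
  define b where "b = A1 X v"
  note bl = norm_blinfun_apply_le[OF _ order_refl]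
  have g2: "g\<^sup>2 \<le> Rg\<^sup>2" using power_mono[of "\<bar>g\<bar>" Rg 2] g by simp
  have na: "norm a \<le> M * nv" "norm b \<le> M * nv" using bl bA[OF x] bA[OF X] unfolding a_def b_def nv_def by auto
  have nab: "norm (a - b) \<le> (M * norm (x - X)) * nv"
    using bl[OF lip(1), of v] unfolding a_def b_def nv_def by (simp add: blinfun.diff_left)
  have nB: "norm (B1 (x, \<psi>) (v, 0)) \<le> M * nv" using bl[of "B1 (x, \<psi>)" M "(v, 0)"] bB[OF x] unfolding nv_def by simp
  have nK: "\<bar>K1 (x, \<psi>) (v, 0)\<bar> \<le> M * nv" using bl[of "K1 (x, \<psi>)" M "(v, 0)"] bK[OF x] unfolding nv_def by simp
  have nW: "\<bar>W1 (x, \<psi>) (v, 0)\<bar> \<le> M * nv" using bl[of "W1 (x, \<psi>)" M "(v, 0)"] bW[OF x] unfolding nv_def by simp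
  have nH: "\<bar>H1 X v\<bar> \<le> M * nv" using bl[of "H1 X" M v] bH[OF X] unfolding nv_def by simp
  have nHd: "\<bar>H1 x v - H1 X v\<bar> \<le> (M * norm (x - X)) * nv"
    using bl[OF lip(2), of v] unfolding nv_def by (simp add: blinfun.diff_left)
  have nVd: "\<bar>V1 x v - V1 X v\<bar> \<le> (M * norm (x - X)) * nv"
    using bl[OF lip(3), of v] unfolding nv_def by (simp add: blinfun.diff_left)
  \<comment> \<open>split the difference into nine terms, each linear in one of the deviations or in \<epsilon>\<close>
  have E1: "\<bar>(g - \<mu>) * (a \<bullet> pp)\<bar> \<le> \<bar>g - \<mu>\<bar> * ((M * nv) * Rp)"
    by (rule abs_mult_le_mult[OF order_refl abs_inner_le_mult[OF na(1) pp]])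
  have E2: "\<bar>\<mu> * ((a - b) \<bullet> pp)\<bar> \<le> \<bar>\<mu>\<bar> * (((M * norm (x - X)) * nv) * Rp)"
    by (rule abs_mult_le_mult[OF order_refl abs_inner_le_mult[OF nab pp]])
  have E3: "\<bar>\<mu> * (b \<bullet> (pp - PP))\<bar> \<le> \<bar>\<mu>\<bar> * ((M * nv) * norm (pp - PP))"
    by (rule abs_mult_le_mult[OF order_refl abs_inner_le_mult[OF na(2) order_refl]])
  have E4: "\<bar>g * ((\<epsilon> *\<^sub>R B1 (x, \<psi>) (v, 0)) \<bullet> pp)\<bar> \<le> Rg * ((\<epsilon> * (M * nv)) * Rp)"
    by (rule abs_mult_le_mult[OF g], rule abs_inner_le_mult[OF norm_scaleR_le_mult[OF _ nB] pp])
      (use \<epsilon> in simp)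
  have E5: "\<bar>(H1 x v - H1 X v) * g\<^sup>2\<bar> \<le> ((M * norm (x - X)) * nv) * Rg\<^sup>2"
    by (rule abs_mult_le_mult[OF nHd]) (use g2 in simp)
  have E6: "\<bar>H1 X v * ((g - \<mu>) * (g + \<mu>))\<bar> \<le> (M * nv) * (\<bar>g - \<mu>\<bar> * (Rg + \<bar>\<mu>\<bar>))"
    by (rule abs_mult_le_mult[OF nH], rule abs_mult_le_mult) (use g in \<open>auto simp: Rg_def\<close>)
  have E7: "\<bar>(\<epsilon> * K1 (x, \<psi>) (v, 0)) * g\<^sup>2\<bar> \<le> (\<epsilon> * (M * nv)) * Rg\<^sup>2"
    by (rule abs_mult_le_mult) (use nK \<epsilon> g2 in \<open>auto simp: abs_mult mult_left_mono\<close>)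
  have E8: "\<bar>\<epsilon> * W1 (x, \<psi>) (v, 0)\<bar> \<le> \<epsilon> * (M * nv)"
    using nW \<epsilon> by (simp add: abs_mult mult_left_mono)
  have eq: "g * ((A1 x v + \<epsilon> *\<^sub>R B1 (x, \<psi>) (v, 0)) \<bullet> pp) + 1/2 * (H1 x v + \<epsilon> * K1 (x, \<psi>) (v, 0)) * g\<^sup>2
      + (V1 x v + \<epsilon> * W1 (x, \<psi>) (v, 0)) - (\<mu> * (A1 X v \<bullet> PP) + 1/2 * H1 X v * \<mu>\<^sup>2 + V1 X v)
    = (g - \<mu>) * (a \<bullet> pp) + \<mu> * ((a - b) \<bullet> pp) + \<mu> * (b \<bullet> (pp - PP)) + g * ((\<epsilon> *\<^sub>R B1 (x, \<psi>) (v, 0)) \<bullet> pp)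
      + 1/2 * ((H1 x v - H1 X v) * g\<^sup>2) + 1/2 * (H1 X v * ((g - \<mu>) * (g + \<mu>)))
      + 1/2 * ((\<epsilon> * K1 (x, \<psi>) (v, 0)) * g\<^sup>2) + (V1 x v - V1 X v) + \<epsilon> * W1 (x, \<psi>) (v, 0)"
    unfolding a_def b_def
    by (simp add: algebra_simps inner_add_left inner_diff_left inner_diff_right power2_eq_square)
  have rhs: "(Lq * norm (x - X) + (\<bar>\<mu>\<bar> * M) * norm (pp - PP) + Lg * \<bar>g - \<mu>\<bar> + \<epsilon> * DG) * norm v
    = \<bar>g - \<mu>\<bar> * ((M * nv) * Rp) + \<bar>\<mu>\<bar> * (((M * norm (x - X)) * nv) * Rp) + \<bar>\<mu>\<bar> * ((M * nv) * norm (pp - PP))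
      + Rg * ((\<epsilon> * (M * nv)) * Rp) + 1/2 * (((M * norm (x - X)) * nv) * Rg\<^sup>2)
      + 1/2 * ((M * nv) * (\<bar>g - \<mu>\<bar> * (Rg + \<bar>\<mu>\<bar>))) + 1/2 * ((\<epsilon> * (M * nv)) * Rg\<^sup>2)
      + (M * norm (x - X)) * nv + \<epsilon> * (M * nv)"
    unfolding nv_def Lq_def Lg_def DG_def by (simp add: algebra_simps)
  show ?thesis
    unfolding eq rhs using E1 E2 E3 E4 E5 E6 E7 E8 nVd by (simp only: abs_le_iff) linarith
qed

lemma pert_bounds:
  assumes "x \<in> S" "0 \<le> \<epsilon>" "\<epsilon> \<le> 1"
  shows "norm (pert \<epsilon> a0 a1 x \<psi>) \<le> 2 * M" "\<bar>pert \<epsilon> h0 h1 x \<psi>\<bar> \<le> 2 * M"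
proof -
  have "norm (pert \<epsilon> a0 a1 x \<psi>) \<le> norm (a0 x) + \<epsilon> * norm (a1 x \<psi>)"
    unfolding pert_def using assms(2) norm_triangle_ineq[of "a0 x" "\<epsilon> *\<^sub>R a1 x \<psi>"] by simp
  also have "\<dots> \<le> M + 1 * M" using bA bB assms by (intro add_mono mult_mono) auto
  finally show "norm (pert \<epsilon> a0 a1 x \<psi>) \<le> 2 * M" by simp
  have "\<bar>pert \<epsilon> h0 h1 x \<psi>\<bar> \<le> \<bar>h0 x\<bar> + \<epsilon> * \<bar>h1 x \<psi>\<bar>"
    unfolding pert_def using assms(2) abs_triangle_ineq[of "h0 x" "\<epsilon> * h1 x \<psi>"] by (simp add: abs_mult)
  also have "\<dots> \<le> M + 1 * M" using bH bK assms by (intro add_mono mult_mono) auto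
  finally show "\<bar>pert \<epsilon> h0 h1 x \<psi>\<bar> \<le> 2 * M" by simp
qed

end

locale averaging_solution = averaging_data +
  fixes \<epsilon> :: real and Q P q p :: "real \<Rightarrow> 'a" and \<phi> \<gamma> :: "real \<Rightarrow> real"
  assumes \<epsilon>_pos: "0 < \<epsilon>" and \<epsilon>_le_1: "\<epsilon> \<le> 1"
    and freq: "\<forall>(x, y, g)\<in>D. \<forall>\<psi>. pert \<epsilon> a0 a1 x \<psi> \<bullet> y + pert \<epsilon> h0 h1 x \<psi> * g > C"
    and avg: "avg_sol \<epsilon> a0 h0 U0 Q P \<mu>"
    and full: "full_sol \<epsilon> a0 a1 h0 h1 U0 U1 q \<phi> p \<gamma>"
    and stay: "\<forall>t\<in>{0..1/\<epsilon>}. (Q t, P t, \<mu>) \<in> Dd"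
    and init: "q 0 = Q 0" "p 0 = P 0" "\<gamma> 0 = \<mu>" "P 0 = P0"
begin

abbreviation "T \<equiv> {0..1/\<epsilon>}"

definition "grad_full t = (SOME g. GDERIV (\<lambda>x. \<gamma> t * (pert \<epsilon> a0 a1 x (\<phi> t) \<bullet> p t)
    + (1/2) * pert \<epsilon> h0 h1 x (\<phi> t) * (\<gamma> t)\<^sup>2 + pert \<epsilon> U0 U1 x (\<phi> t)) (q t) :> g \<and>
  (p has_vector_derivative (- \<epsilon>) *\<^sub>R g) (at t within T))"
definition "dphi_full t = (SOME d. ((\<lambda>\<psi>. \<gamma> t * (a1 (q t) \<psi> \<bullet> p t) + (1/2) * h1 (q t) \<psi> * (\<gamma> t)\<^sup>2
    + U1 (q t) \<psi>) has_real_derivative d) (at (\<phi> t)) \<and>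
  (\<gamma> has_vector_derivative (- \<epsilon> * d)) (at t within T))"
definition "grad_avg t = (SOME g. GDERIV (\<lambda>x. \<mu> * (a0 x \<bullet> P t) + (1/2) * h0 x * \<mu>\<^sup>2 + U0 x) (Q t) :> g \<and>
  (P has_vector_derivative (- \<epsilon>) *\<^sub>R g) (at t within T))"

lemma q_deriv: "t \<in> T \<Longrightarrow> (q has_vector_derivative \<epsilon> *\<^sub>R (p t + \<gamma> t *\<^sub>R pert \<epsilon> a0 a1 (q t) (\<phi> t))) (at t within T)"
  using full unfolding full_sol_def Let_def by blast

lemma phi_deriv: "t \<in> T \<Longrightarrow>
  (\<phi> has_vector_derivative (pert \<epsilon> a0 a1 (q t) (\<phi> t) \<bullet> p t + pert \<epsilon> h0 h1 (q t) (\<phi> t) * \<gamma> t)) (at t within T)"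
  using full unfolding full_sol_def Let_def by blast

lemma grad_full: "t \<in> T \<Longrightarrow>
  GDERIV (\<lambda>x. \<gamma> t * (pert \<epsilon> a0 a1 x (\<phi> t) \<bullet> p t) + (1/2) * pert \<epsilon> h0 h1 x (\<phi> t) * (\<gamma> t)\<^sup>2
    + pert \<epsilon> U0 U1 x (\<phi> t)) (q t) :> grad_full t \<and>
  (p has_vector_derivative (- \<epsilon>) *\<^sub>R grad_full t) (at t within T)"
  unfolding grad_full_def by (rule someI_ex) (use full in \<open>auto simp: full_sol_def Let_def\<close>)

lemma dphi_full: "t \<in> T \<Longrightarrow>
  ((\<lambda>\<psi>. \<gamma> t * (a1 (q t) \<psi> \<bullet> p t) + (1/2) * h1 (q t) \<psi> * (\<gamma> t)\<^sup>2 + U1 (q t) \<psi>)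
    has_real_derivative dphi_full t) (at (\<phi> t)) \<and>
  (\<gamma> has_vector_derivative (- \<epsilon> * dphi_full t)) (at t within T)"
  unfolding dphi_full_def by (rule someI_ex) (use full in \<open>auto simp: full_sol_def Let_def\<close>)

lemma Q_deriv: "t \<in> T \<Longrightarrow> (Q has_vector_derivative \<epsilon> *\<^sub>R (P t + \<mu> *\<^sub>R a0 (Q t))) (at t within T)"
  using avg unfolding avg_sol_def by blast

lemma grad_avg: "t \<in> T \<Longrightarrow>
  GDERIV (\<lambda>x. \<mu> * (a0 x \<bullet> P t) + (1/2) * h0 x * \<mu>\<^sup>2 + U0 x) (Q t) :> grad_avg t \<and>
  (P has_vector_derivative (- \<epsilon>) *\<^sub>R grad_avg t) (at t within T)"
  unfolding grad_avg_def by (rule someI_ex) (use avg in \<open>auto simp: avg_sol_def\<close>)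

lemma eps_mult_le_1: "t \<in> T \<Longrightarrow> \<epsilon> * t \<le> 1"
  using \<epsilon>_pos by (auto simp: field_simps)

lemma continuous_on_solutions:
  "continuous_on T q" "continuous_on T p" "continuous_on T \<gamma>" "continuous_on T Q" "continuous_on T P"
proof -
  show "continuous_on T q" by (rule continuous_on_vector_derivative) (rule q_deriv)
  show "continuous_on T p" by (rule continuous_on_vector_derivative) (use grad_full in blast)
  show "continuous_on T \<gamma>" by (rule continuous_on_vector_derivative) (use dphi_full in blast)
  show "continuous_on T Q" by (rule continuous_on_vector_derivative) (rule Q_deriv)
  show "continuous_on T P" by (rule continuous_on_vector_derivative) (use grad_avg in blast)
qed

lemma Q_in_S: "t \<in> T \<Longrightarrow> Q t \<in> S"
  using stay Dd_subset by (metis fst_conv image_eqI subsetD)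

lemma ball_Q_subset: "t \<in> T \<Longrightarrow> ball (Q t) \<delta> \<subseteq> S"
proof
  fix y assume t: "t \<in> T" and y: "y \<in> ball (Q t) \<delta>"
  have "(y, P t, \<mu>) \<in> ball (Q t, P t, \<mu>) \<delta>" using y by (simp add: dist_Pair_Pair)
  then have "(y, P t, \<mu>) \<in> D" using nbhd stay t by blast
  then show "y \<in> S" by (metis fst_conv image_eqI)
qed

lemma has_derivative_avg_hamiltonian: "x \<in> S \<Longrightarrow>
  ((\<lambda>x. \<mu> * (a0 x \<bullet> Pt) + (1/2) * h0 x * \<mu>\<^sup>2 + U0 x) has_derivative
   (\<lambda>v. \<mu> * (A1 x v \<bullet> Pt) + 1/2 * H1 x v * \<mu>\<^sup>2 + V1 x v)) (at x)"
  by (auto intro!: derivative_eq_intros dA dH dV)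

lemma grad_avg_bound:
  assumes t: "t \<in> T"
  shows "norm (grad_avg t) \<le> \<bar>\<mu>\<bar> * M * norm (P t) + cP"
proof -
  have x: "Q t \<in> S" using Q_in_S t .
  have "norm (grad_avg t - 0) \<le> \<bar>\<mu>\<bar> * M * norm (P t) + cP"
  proof (rule gderiv_norm_diff_le[OF conjunct1[OF grad_avg[OF t]] has_derivative_avg_hamiltonian[OF x]
        GDERIV_const has_derivative_const])
    fix v :: 'a
    have "\<bar>A1 (Q t) v \<bullet> P t\<bar> \<le> (M * norm v) * norm (P t)"
      by (rule abs_inner_le_mult[OF norm_blinfun_apply_le]) (use bA[OF x] M_nonneg in auto)
    then have "\<bar>\<mu> * (A1 (Q t) v \<bullet> P t)\<bar> \<le> \<bar>\<mu>\<bar> * ((M * norm v) * norm (P t))"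
      by (simp add: abs_mult mult_left_mono)
    moreover have "\<bar>H1 (Q t) v\<bar> \<le> M * norm v" "\<bar>V1 (Q t) v\<bar> \<le> M * norm v"
      using norm_blinfun_apply_le[of "H1 (Q t)" M v "norm v"] norm_blinfun_apply_le[of "V1 (Q t)" M v "norm v"]
        bH[OF x] bV[OF x] M_nonneg by auto
    then have "\<bar>1/2 * H1 (Q t) v * \<mu>\<^sup>2\<bar> \<le> 1/2 * (M * norm v) * \<mu>\<^sup>2"
      by (simp add: abs_mult mult_right_mono)
    ultimately show "\<bar>\<mu> * (A1 (Q t) v \<bullet> P t) + 1/2 * H1 (Q t) v * \<mu>\<^sup>2 + V1 (Q t) v - 0\<bar>
        \<le> (\<bar>\<mu>\<bar> * M * norm (P t) + cP) * norm v"
      using \<open>\<bar>V1 (Q t) v\<bar> \<le> M * norm v\<close> by (simp add: cP_def algebra_simps)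
  qed (use M_nonneg constants_nonneg(1) in \<open>auto simp: cP_def\<close>)
  then show ?thesis by simp
qed

lemma P_bound:
  assumes t: "t \<in> T"
  shows "norm (P t) \<le> RP"
proof -
  have contP: "continuous_on {0..t} P" using continuous_on_solutions(5) t by (auto intro: continuous_on_subset)
  have "norm (P s) \<le> (norm P0 + cP) + (\<epsilon> * (\<bar>\<mu>\<bar> * M)) * integral {0..s} (\<lambda>s. norm (P s))"
    if s: "s \<in> {0..t}" for s
  proof -
    have sT: "{0..s} \<subseteq> T" using s t by auto
    have "norm (P s - P 0) \<le> integral {0..s} (\<lambda>x. \<epsilon> * ((\<bar>\<mu>\<bar> * M) * norm (P x) + cP))"
    proof (rule norm_increment_le_integral[where f'="\<lambda>x. (- \<epsilon>) *\<^sub>R grad_avg x"])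
      fix x assume x: "x \<in> {0..s}"
      then have xT: "x \<in> T" using sT by auto
      show "(P has_vector_derivative (- \<epsilon>) *\<^sub>R grad_avg x) (at x within {0..s})"
        using conjunct2[OF grad_avg[OF xT]] has_vector_derivative_within_subset sT by blast
      show "norm ((- \<epsilon>) *\<^sub>R grad_avg x) \<le> \<epsilon> * ((\<bar>\<mu>\<bar> * M) * norm (P x) + cP)"
        using grad_avg_bound[OF xT] \<epsilon>_pos by (simp add: mult_left_mono)
    qed (use contP s in \<open>auto intro!: continuous_intros intro: continuous_on_subset\<close>)
    also have "\<dots> = \<epsilon> * (\<bar>\<mu>\<bar> * M) * integral {0..s} (\<lambda>s. norm (P s)) + \<epsilon> * cP * s"
      by (rule integral_affine_comp) (use s contP in \<open>auto intro!: continuous_intros intro: continuous_on_subset\<close>)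
    also have "\<epsilon> * cP * s \<le> cP"
      using mult_left_mono[OF eps_mult_le_1, of s cP] s t constants_nonneg by (auto simp: ac_simps)
    finally show ?thesis using init(4) norm_triangle_ineq2[of "P s" "P 0"] by simp
  qed
  then have "norm (P t) \<le> (norm P0 + cP) * exp (\<epsilon> * (\<bar>\<mu>\<bar> * M) * t)"
    by (intro gronwall_integral) (use contP t \<epsilon>_pos M_nonneg in \<open>auto intro!: continuous_intros\<close>)
  also have "\<dots> \<le> RP"
  proof -
    have "\<epsilon> * t * (\<bar>\<mu>\<bar> * M) \<le> 1 * (\<bar>\<mu>\<bar> * M)"
      by (rule mult_right_mono[OF eps_mult_le_1[OF t]]) (use M_nonneg in simp)
    moreover have "0 \<le> norm P0 + cP" using constants_nonneg(1) by simp
    ultimately show ?thesis unfolding RP_def by (intro mult_left_mono) (auto simp: ac_simps)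
  qed
  finally show ?thesis .
qed

definition "err s = \<bar>\<gamma> s - \<mu>\<bar> + norm (q s - Q s) + norm (p s - P s)"

lemma err_0: "err 0 = 0"
  unfolding err_def using init by simp

lemma continuous_on_err: "continuous_on T err"
  unfolding err_def[abs_def] using continuous_on_solutions by (intro continuous_intros)

lemma in_tube:
  assumes s: "s \<in> T" and e: "err s < \<delta>"
  shows "(q s, p s, \<gamma> s) \<in> D" "q s \<in> S" "q s \<in> ball (Q s) \<delta>" "norm (p s) \<le> Rp" "\<bar>\<gamma> s\<bar> \<le> Rg"
proof -
  have "norm ((q s, p s, \<gamma> s) - (Q s, P s, \<mu>)) \<le> norm (q s - Q s) + (norm (p s - P s) + norm (\<gamma> s - \<mu>))"
    using norm_Pair_le[of "q s - Q s" "(p s - P s, \<gamma> s - \<mu>)"] norm_Pair_le[of "p s - P s" "\<gamma> s - \<mu>"] by simp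
  then have "dist (q s, p s, \<gamma> s) (Q s, P s, \<mu>) < \<delta>"
    using e unfolding err_def by (simp add: dist_norm)
  then have "(q s, p s, \<gamma> s) \<in> ball (Q s, P s, \<mu>) \<delta>" by (simp add: dist_commute)
  then show D: "(q s, p s, \<gamma> s) \<in> D" using nbhd stay s by blast
  then show "q s \<in> S" by (metis fst_conv image_eqI)
  have "norm (q s - Q s) < \<delta>" using e unfolding err_def
    using norm_ge_zero[of "p s - P s"] abs_ge_zero[of "\<gamma> s - \<mu>"] by linarith
  then show "q s \<in> ball (Q s) \<delta>" by (simp add: dist_norm norm_minus_commute)
  have "norm (p s) \<le> norm (P s) + norm (p s - P s)" by (metis norm_triangle_sub add.commute)
  then show "norm (p s) \<le> Rp" using P_bound[OF s] e unfolding err_def Rp_def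
    using norm_ge_zero[of "q s - Q s"] abs_ge_zero[of "\<gamma> s - \<mu>"] by linarith
  show "\<bar>\<gamma> s\<bar> \<le> Rg" using e unfolding err_def Rg_def
    using norm_ge_zero[of "q s - Q s"] norm_ge_zero[of "p s - P s"] by linarith
qed

lemma lipschitz_near_Q:
  assumes s: "s \<in> T" and y: "y \<in> ball (Q s) \<delta>"
  shows "norm (a0 y - a0 (Q s)) \<le> M * norm (y - Q s)" "norm (A1 y - A1 (Q s)) \<le> M * norm (y - Q s)"
    "norm (H1 y - H1 (Q s)) \<le> M * norm (y - Q s)" "norm (V1 y - V1 (Q s)) \<le> M * norm (y - Q s)"
proof -
  have S: "x \<in> S" if "x \<in> ball (Q s) \<delta>" for x using ball_Q_subset[OF s] that by blast
  have Q: "Q s \<in> ball (Q s) \<delta>" using \<delta>_pos by simp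
  show "norm (a0 y - a0 (Q s)) \<le> M * norm (y - Q s)"
    by (rule norm_diff_le_of_blinfun_derivative_bound[OF _ dA _ Q y]) (use S bA in auto)
  show "norm (A1 y - A1 (Q s)) \<le> M * norm (y - Q s)"
    by (rule norm_diff_le_of_blinfun_derivative_bound[OF _ dA2 _ Q y]) (use S bA in auto)
  show "norm (H1 y - H1 (Q s)) \<le> M * norm (y - Q s)"
    by (rule norm_diff_le_of_blinfun_derivative_bound[OF _ dH2 _ Q y]) (use S bH in auto)
  show "norm (V1 y - V1 (Q s)) \<le> M * norm (y - Q s)"
    by (rule norm_diff_le_of_blinfun_derivative_bound[OF _ dV2 _ Q y]) (use S bV in auto)
qed

lemma grad_diff_bound:
  assumes s: "s \<in> T" and e: "err s < \<delta>"
  shows "norm (grad_full s - grad_avg s)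
    \<le> Lq * norm (q s - Q s) + (\<bar>\<mu>\<bar> * M) * norm (p s - P s) + Lg * \<bar>\<gamma> s - \<mu>\<bar> + \<epsilon> * DG"
proof (rule gderiv_norm_diff_le[OF conjunct1[OF grad_full[OF s]] has_derivative_full_hamiltonian
      conjunct1[OF grad_avg[OF s]] has_derivative_avg_hamiltonian])
  show "q s \<in> S" "Q s \<in> S" using in_tube[OF s e] Q_in_S[OF s] by auto
  show "0 \<le> Lq * norm (q s - Q s) + (\<bar>\<mu>\<bar> * M) * norm (p s - P s) + Lg * \<bar>\<gamma> s - \<mu>\<bar> + \<epsilon> * DG"
    using constants_nonneg M_nonneg \<epsilon>_pos \<delta>_pos by (intro add_nonneg_nonneg mult_nonneg_nonneg) auto
  show "\<bar>\<gamma> s * ((A1 (q s) v + \<epsilon> *\<^sub>R B1 (q s, \<phi> s) (v, 0)) \<bullet> p s)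
      + 1/2 * (H1 (q s) v + \<epsilon> * K1 (q s, \<phi> s) (v, 0)) * (\<gamma> s)\<^sup>2 + (V1 (q s) v + \<epsilon> * W1 (q s, \<phi> s) (v, 0))
      - (\<mu> * (A1 (Q s) v \<bullet> P s) + 1/2 * H1 (Q s) v * \<mu>\<^sup>2 + V1 (Q s) v)\<bar>
    \<le> (Lq * norm (q s - Q s) + (\<bar>\<mu>\<bar> * M) * norm (p s - P s) + Lg * \<bar>\<gamma> s - \<mu>\<bar> + \<epsilon> * DG) * norm v" for v
    using in_tube[OF s e] Q_in_S[OF s] lipschitz_near_Q[OF s] \<epsilon>_pos
    by (intro hamiltonian_derivative_diff_bound) auto
qed

lemma q_deriv_diff_bound:
  assumes s: "s \<in> T" and e: "err s < \<delta>"
  shows "norm (\<epsilon> *\<^sub>R (p s + \<gamma> s *\<^sub>R pert \<epsilon> a0 a1 (q s) (\<phi> s)) - \<epsilon> *\<^sub>R (P s + \<mu> *\<^sub>R a0 (Q s)))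
     \<le> \<epsilon> * (norm (p s - P s) + M * \<bar>\<gamma> s - \<mu>\<bar> + \<bar>\<mu>\<bar> * M * norm (q s - Q s) + \<epsilon> * (Rg * M))"
proof -
  have x: "q s \<in> S" and xb: "q s \<in> ball (Q s) \<delta>" and ng: "\<bar>\<gamma> s\<bar> \<le> Rg"
    using in_tube[OF s e] by auto
  have "norm ((\<gamma> s - \<mu>) *\<^sub>R a0 (q s)) \<le> \<bar>\<gamma> s - \<mu>\<bar> * M"
    by (rule norm_scaleR_le_mult) (use bA[OF x] in auto)
  moreover have "norm (\<mu> *\<^sub>R (a0 (q s) - a0 (Q s))) \<le> \<bar>\<mu>\<bar> * (M * norm (q s - Q s))"
    by (rule norm_scaleR_le_mult[OF order_refl lipschitz_near_Q(1)[OF s xb]])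
  moreover have "norm ((\<gamma> s * \<epsilon>) *\<^sub>R a1 (q s) (\<phi> s)) \<le> (Rg * \<epsilon>) * M"
    by (rule norm_scaleR_le_mult) (use bB[OF x] ng \<epsilon>_pos in \<open>auto simp: abs_mult mult_right_mono\<close>)
  ultimately have "norm ((p s - P s) + (\<gamma> s - \<mu>) *\<^sub>R a0 (q s) + \<mu> *\<^sub>R (a0 (q s) - a0 (Q s))
      + (\<gamma> s * \<epsilon>) *\<^sub>R a1 (q s) (\<phi> s))
    \<le> norm (p s - P s) + M * \<bar>\<gamma> s - \<mu>\<bar> + \<bar>\<mu>\<bar> * M * norm (q s - Q s) + \<epsilon> * (Rg * M)"
    by (smt (verit) norm_triangle_le norm_triangle_ineq mult.commute mult.assoc)
  moreover have "\<epsilon> *\<^sub>R (p s + \<gamma> s *\<^sub>R pert \<epsilon> a0 a1 (q s) (\<phi> s)) - \<epsilon> *\<^sub>R (P s + \<mu> *\<^sub>R a0 (Q s))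
    = \<epsilon> *\<^sub>R ((p s - P s) + (\<gamma> s - \<mu>) *\<^sub>R a0 (q s) + \<mu> *\<^sub>R (a0 (q s) - a0 (Q s)) + (\<gamma> s * \<epsilon>) *\<^sub>R a1 (q s) (\<phi> s))"
    unfolding pert_def by (simp add: algebra_simps)
  ultimately show ?thesis using \<epsilon>_pos by (simp add: mult_left_mono)
qed

lemma dphi_full_eq:
  assumes s: "s \<in> T" and e: "err s < \<delta>"
  shows "dphi_full s = \<gamma> s * (B1 (q s, \<phi> s) (0, 1) \<bullet> p s) + 1/2 * K1 (q s, \<phi> s) (0, 1) * (\<gamma> s)\<^sup>2
    + W1 (q s, \<phi> s) (0, 1)"
proof -
  have x: "q s \<in> S" using in_tube[OF s e] by auto
  have "((\<lambda>\<psi>. \<gamma> s * (a1 (q s) \<psi> \<bullet> p s) + (1/2) * h1 (q s) \<psi> * (\<gamma> s)\<^sup>2 + U1 (q s) \<psi>) has_real_derivative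
     \<gamma> s * (B1 (q s, \<phi> s) (0, 1) \<bullet> p s) + 1/2 * K1 (q s, \<phi> s) (0, 1) * (\<gamma> s)\<^sup>2 + W1 (q s, \<phi> s) (0, 1))
     (at (\<phi> s))"
    using has_field_derivative_inner[OF has_vector_derivative_partial_snd[OF dB[OF x]]
        has_vector_derivative_const[of "p s"]]
      has_vector_derivative_partial_snd[OF dK[OF x]] has_vector_derivative_partial_snd[OF dW[OF x]]
    by (auto intro!: derivative_eq_intros simp: has_real_derivative_iff_has_vector_derivative[symmetric]
        mult.commute)
  then show ?thesis using conjunct1[OF dphi_full[OF s]] DERIV_unique by blast
qed

definition "G s = \<gamma> s * (a1 (q s) (\<phi> s) \<bullet> p s) + 1/2 * h1 (q s) (\<phi> s) * (\<gamma> s)\<^sup>2 + U1 (q s) (\<phi> s)"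
definition "Om s = pert \<epsilon> a0 a1 (q s) (\<phi> s) \<bullet> p s + pert \<epsilon> h0 h1 (q s) (\<phi> s) * \<gamma> s"

text \<open>The near-identity change of the action variable that removes the oscillation of \<open>\<gamma>\<close>
  to first order: \<open>\<gamma>' = - \<epsilon> \<partial>\<^sub>\<phi>G\<close> and \<open>\<phi>' = Om\<close>, so \<open>\<gamma>' + \<epsilon> (G / Om)'\<close> is \<open>O(\<epsilon>\<^sup>2)\<close>.\<close>

definition "W s = \<gamma> s + \<epsilon> * (G s / Om s)"

definition "vq s = \<epsilon> *\<^sub>R (p s + \<gamma> s *\<^sub>R pert \<epsilon> a0 a1 (q s) (\<phi> s))"
definition "vp s = (- \<epsilon>) *\<^sub>R grad_full s"
definition "v\<gamma> s = - \<epsilon> * dphi_full s"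

definition "dG s = v\<gamma> s * (a1 (q s) (\<phi> s) \<bullet> p s)
    + \<gamma> s * (a1 (q s) (\<phi> s) \<bullet> vp s + B1 (q s, \<phi> s) (vq s, Om s) \<bullet> p s)
    + 1/2 * (K1 (q s, \<phi> s) (vq s, Om s) * (\<gamma> s)\<^sup>2 + h1 (q s) (\<phi> s) * (2 * \<gamma> s * v\<gamma> s))
    + W1 (q s, \<phi> s) (vq s, Om s)"
definition "dOm s = pert \<epsilon> a0 a1 (q s) (\<phi> s) \<bullet> vp s
    + (A1 (q s) (vq s) + \<epsilon> *\<^sub>R B1 (q s, \<phi> s) (vq s, Om s)) \<bullet> p s
    + ((H1 (q s) (vq s) + \<epsilon> * K1 (q s, \<phi> s) (vq s, Om s)) * \<gamma> s + pert \<epsilon> h0 h1 (q s) (\<phi> s) * v\<gamma> s)"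
definition "slow_dG s = v\<gamma> s * (a1 (q s) (\<phi> s) \<bullet> p s)
    + \<gamma> s * (a1 (q s) (\<phi> s) \<bullet> vp s + B1 (q s, \<phi> s) (vq s, 0) \<bullet> p s)
    + 1/2 * (K1 (q s, \<phi> s) (vq s, 0) * (\<gamma> s)\<^sup>2 + h1 (q s) (\<phi> s) * (2 * \<gamma> s * v\<gamma> s))
    + W1 (q s, \<phi> s) (vq s, 0)"

lemma bounds_in_tube:
  assumes s: "s \<in> T" and e: "err s < \<delta>"
  shows "norm (vq s) \<le> \<epsilon> * Vq" "norm (grad_full s) \<le> Vp" "\<bar>dphi_full s\<bar> \<le> DG"
    "C < Om s" "\<bar>Om s\<bar> \<le> VOm" "\<bar>G s\<bar> \<le> DG"
proof -
  have D: "(q s, p s, \<gamma> s) \<in> D" and x: "q s \<in> S" and np: "norm (p s) \<le> Rp" and ng: "\<bar>\<gamma> s\<bar> \<le> Rg"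
    using in_tube[OF s e] by auto
  note pb = pert_bounds[OF x less_imp_le[OF \<epsilon>_pos] \<epsilon>_le_1]
  have "norm (p s + \<gamma> s *\<^sub>R pert \<epsilon> a0 a1 (q s) (\<phi> s)) \<le> Rp + Rg * (2 * M)"
    using norm_triangle_ineq[of "p s" "\<gamma> s *\<^sub>R pert \<epsilon> a0 a1 (q s) (\<phi> s)"] np
      norm_scaleR_le_mult[OF ng pb(1)[of "\<phi> s"]] by linarith
  then show "norm (vq s) \<le> \<epsilon> * Vq"
    unfolding vq_def Vq_def using \<epsilon>_pos by (simp add: mult_left_mono)
  have "norm (grad_full s) \<le> norm (grad_avg s) + norm (grad_full s - grad_avg s)"
    by (metis norm_triangle_sub add.commute)
  moreover have "norm (grad_avg s) \<le> \<bar>\<mu>\<bar> * M * RP + cP"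
    using grad_avg_bound[OF s] P_bound[OF s] M_nonneg by (smt (verit) abs_ge_zero mult_left_mono zero_le_mult_iff)
  moreover have "norm (grad_full s - grad_avg s) \<le> Lq * \<delta> + (\<bar>\<mu>\<bar> * M) * \<delta> + Lg * \<delta> + \<epsilon> * DG"
  proof -
    have ee: "norm (q s - Q s) \<le> \<delta>" "norm (p s - P s) \<le> \<delta>" "\<bar>\<gamma> s - \<mu>\<bar> \<le> \<delta>"
      using e unfolding err_def by (smt (verit) norm_ge_zero abs_ge_zero)+
    have k0: "0 \<le> Lq" "0 \<le> Lg" "0 \<le> \<bar>\<mu>\<bar> * M" using constants_nonneg M_nonneg by auto
    show ?thesis
      using grad_diff_bound[OF s e] mult_left_mono[OF ee(1) k0(1)] mult_left_mono[OF ee(2) k0(3)]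
        mult_left_mono[OF ee(3) k0(2)] by linarith
  qed
  moreover have "\<epsilon> * DG \<le> DG"
    using mult_left_le_one_le[OF constants_nonneg(7) less_imp_le[OF \<epsilon>_pos] \<epsilon>_le_1] .
  ultimately show "norm (grad_full s) \<le> Vp" unfolding Vp_def by linarith
  have "norm (0::'a, 1::real) \<le> 1" by simp
  note e1 = norm_blinfun_apply_le[OF _ this]
  have nB: "norm (B1 (q s, \<phi> s) (0, 1)) \<le> M * 1" "\<bar>K1 (q s, \<phi> s) (0, 1)\<bar> \<le> M * 1"
    "\<bar>W1 (q s, \<phi> s) (0, 1)\<bar> \<le> M * 1"
    using e1[of "B1 (q s, \<phi> s)"] e1[of "K1 (q s, \<phi> s)"] e1[of "W1 (q s, \<phi> s)"] bB[OF x] bK[OF x] bW[OF x]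
    by auto
  have g2: "(\<gamma> s)\<^sup>2 \<le> Rg\<^sup>2" using power_mono[of "\<bar>\<gamma> s\<bar> " Rg 2] ng by simp
  have "\<bar>\<gamma> s * (B1 (q s, \<phi> s) (0, 1) \<bullet> p s)\<bar> \<le> Rg * (M * 1 * Rp)"
    by (rule abs_mult_le_mult[OF ng abs_inner_le_mult[OF nB(1) np]])
  moreover have "\<bar>K1 (q s, \<phi> s) (0, 1) * (\<gamma> s)\<^sup>2\<bar> \<le> M * 1 * Rg\<^sup>2"
    by (rule abs_mult_le_mult[OF nB(2)]) (use g2 in simp)
  ultimately show "\<bar>dphi_full s\<bar> \<le> DG"
    unfolding dphi_full_eq[OF s e] DG_def using nB(3) by (simp only: abs_le_iff) (simp add: algebra_simps; linarith)
  have nb1: "norm (a1 (q s) (\<phi> s)) \<le> M" "\<bar>h1 (q s) (\<phi> s)\<bar> \<le> M" "\<bar>U1 (q s) (\<phi> s)\<bar> \<le> M"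
    using bB[OF x] bK[OF x] bW[OF x] by auto
  have "\<bar>\<gamma> s * (a1 (q s) (\<phi> s) \<bullet> p s)\<bar> \<le> Rg * (M * Rp)"
    by (rule abs_mult_le_mult[OF ng abs_inner_le_mult[OF nb1(1) np]])
  moreover have "\<bar>h1 (q s) (\<phi> s) * (\<gamma> s)\<^sup>2\<bar> \<le> M * Rg\<^sup>2"
    by (rule abs_mult_le_mult[OF nb1(2)]) (use g2 in simp)
  ultimately show "\<bar>G s\<bar> \<le> DG"
    unfolding G_def DG_def using nb1(3) by (simp only: abs_le_iff) (simp add: algebra_simps; linarith)
  show "C < Om s" using freq D unfolding Om_def by fast
  have "\<bar>pert \<epsilon> a0 a1 (q s) (\<phi> s) \<bullet> p s\<bar> \<le> 2 * M * Rp" by (rule abs_inner_le_mult[OF pb(1) np])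
  moreover have "\<bar>pert \<epsilon> h0 h1 (q s) (\<phi> s) * \<gamma> s\<bar> \<le> 2 * M * Rg" by (rule abs_mult_le_mult[OF pb(2) ng])
  ultimately show "\<bar>Om s\<bar> \<le> VOm" unfolding Om_def VOm_def by linarith
qed

lemma G_Om_derivatives:
  assumes s: "s \<in> T" and e: "err s < \<delta>"
  shows "(G has_field_derivative dG s) (at s within T)" "(Om has_field_derivative dOm s) (at s within T)"
proof -
  have x: "q s \<in> S" using in_tube[OF s e] by auto
  have dq: "(q has_vector_derivative vq s) (at s within T)" unfolding vq_def by (rule q_deriv[OF s])
  have d\<phi>: "(\<phi> has_vector_derivative Om s) (at s within T)" unfolding Om_def by (rule phi_deriv[OF s])
  have dp: "(p has_vector_derivative vp s) (at s within T)" unfolding vp_def using grad_full[OF s] by blast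
  have d\<gamma>: "(\<gamma> has_field_derivative v\<gamma> s) (at s within T)" unfolding v\<gamma>_def
    using dphi_full[OF s] has_real_derivative_iff_has_vector_derivative by blast
  have d\<alpha>: "((\<lambda>s. a1 (q s) (\<phi> s)) has_vector_derivative B1 (q s, \<phi> s) (vq s, Om s)) (at s within T)"
    by (rule has_vector_derivative_compose2_at[OF dB[OF x] dq d\<phi>])
  have d\<eta>: "((\<lambda>s. h1 (q s) (\<phi> s)) has_field_derivative K1 (q s, \<phi> s) (vq s, Om s)) (at s within T)"
    unfolding has_real_derivative_iff_has_vector_derivative
    by (rule has_vector_derivative_compose2_at[OF dK[OF x] dq d\<phi>])
  have d\<upsilon>: "((\<lambda>s. U1 (q s) (\<phi> s)) has_field_derivative W1 (q s, \<phi> s) (vq s, Om s)) (at s within T)"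
    unfolding has_real_derivative_iff_has_vector_derivative
    by (rule has_vector_derivative_compose2_at[OF dW[OF x] dq d\<phi>])
  have dA0: "((\<lambda>s. a0 (q s)) has_vector_derivative A1 (q s) (vq s)) (at s within T)"
    by (rule has_vector_derivative_compose_at[OF dA[OF x] dq])
  have dh0: "((\<lambda>s. h0 (q s)) has_field_derivative H1 (q s) (vq s)) (at s within T)"
    unfolding has_real_derivative_iff_has_vector_derivative
    by (rule has_vector_derivative_compose_at[OF dH[OF x] dq])
  have dpA: "((\<lambda>s. pert \<epsilon> a0 a1 (q s) (\<phi> s)) has_vector_derivative
      A1 (q s) (vq s) + \<epsilon> *\<^sub>R B1 (q s, \<phi> s) (vq s, Om s)) (at s within T)"
    unfolding pert_def
    by (rule has_vector_derivative_add[OF dA0 bounded_linear.has_vector_derivative[OF bounded_linear_scaleR_right d\<alpha>]])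
  show "(G has_field_derivative dG s) (at s within T)"
    unfolding G_def[abs_def] dG_def
    by (rule derivative_eq_intros d\<gamma> has_field_derivative_inner[OF d\<alpha> dp] d\<eta> d\<upsilon> refl | simp)+
  have "((\<lambda>s. pert \<epsilon> a0 a1 (q s) (\<phi> s) \<bullet> p s + (h0 (q s) + \<epsilon> * h1 (q s) (\<phi> s)) * \<gamma> s)
      has_field_derivative dOm s) (at s within T)"
    unfolding dOm_def
    by (rule derivative_eq_intros d\<gamma> has_field_derivative_inner[OF dpA dp] d\<eta> dh0 refl | simp)+
      (simp add: pert_def algebra_simps)
  moreover have "Om = (\<lambda>s. pert \<epsilon> a0 a1 (q s) (\<phi> s) \<bullet> p s + (h0 (q s) + \<epsilon> * h1 (q s) (\<phi> s)) * \<gamma> s)"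
    unfolding Om_def[abs_def] pert_def by simp
  ultimately show "(Om has_field_derivative dOm s) (at s within T)" by simp
qed

text \<open>The fast part of \<open>G'\<close> is \<open>\<partial>\<^sub>\<phi>G \<cdot> \<phi>'\<close>, which cancels against \<open>\<gamma>'\<close> in \<open>W'\<close>.\<close>

lemma dG_eq_slow_plus_fast:
  assumes s: "s \<in> T" and e: "err s < \<delta>"
  shows "dG s = slow_dG s + dphi_full s * Om s"
proof -
  let ?v = "(vq s, Om s)" and ?x = "(q s, \<phi> s)"
  have "B1 ?x ?v = B1 ?x (vq s, 0) + Om s *\<^sub>R B1 ?x (0, 1)" by (rule blinfun_apply_Pair_split)
  moreover have "K1 ?x ?v = K1 ?x (vq s, 0) + Om s * K1 ?x (0, 1)"
    using blinfun_apply_Pair_split[of "K1 ?x" "vq s" "Om s"] by simp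
  moreover have "W1 ?x ?v = W1 ?x (vq s, 0) + Om s * W1 ?x (0, 1)"
    using blinfun_apply_Pair_split[of "W1 ?x" "vq s" "Om s"] by simp
  ultimately show ?thesis
    unfolding dG_def slow_dG_def dphi_full_eq[OF s e] by (simp add: algebra_simps inner_add_left)
qed

lemma slow_dG_bound:
  assumes s: "s \<in> T" and e: "err s < \<delta>"
  shows "\<bar>slow_dG s\<bar> \<le> \<epsilon> * KE"
proof -
  have x: "q s \<in> S" and np: "norm (p s) \<le> Rp" and ng: "\<bar>\<gamma> s\<bar> \<le> Rg" using in_tube[OF s e] by auto
  note bnd = bounds_in_tube[OF s e]
  have nvp: "norm (vp s) \<le> \<epsilon> * Vp" unfolding vp_def using bnd(2) \<epsilon>_pos by (simp add: mult_left_mono)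
  have nvg: "\<bar>v\<gamma> s\<bar> \<le> \<epsilon> * DG" unfolding v\<gamma>_def using bnd(3) \<epsilon>_pos by (simp add: abs_mult mult_left_mono)
  have nvq: "norm (vq s, 0::real) \<le> \<epsilon> * Vq" using bnd(1) by simp
  note bl = norm_blinfun_apply_le[OF _ nvq]
  have na1: "norm (a1 (q s) (\<phi> s)) \<le> M" "\<bar>h1 (q s) (\<phi> s)\<bar> \<le> M" using bB[OF x] bK[OF x] by auto
  have nB: "norm (B1 (q s, \<phi> s) (vq s, 0)) \<le> M * (\<epsilon> * Vq)" using bl bB[OF x] by blast
  have nK: "\<bar>K1 (q s, \<phi> s) (vq s, 0)\<bar> \<le> M * (\<epsilon> * Vq)" using bl bK[OF x] by (metis real_norm_def)
  have nW: "\<bar>W1 (q s, \<phi> s) (vq s, 0)\<bar> \<le> M * (\<epsilon> * Vq)" using bl bW[OF x] by (metis real_norm_def)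
  have g2: "(\<gamma> s)\<^sup>2 \<le> Rg\<^sup>2" using power_mono[of "\<bar>\<gamma> s\<bar> " Rg 2] ng by simp
  have e1: "\<bar>v\<gamma> s * (a1 (q s) (\<phi> s) \<bullet> p s)\<bar> \<le> (\<epsilon> * DG) * (M * Rp)"
    by (rule abs_mult_le_mult[OF nvg abs_inner_le_mult[OF na1(1) np]])
  have "\<bar>a1 (q s) (\<phi> s) \<bullet> vp s + B1 (q s, \<phi> s) (vq s, 0) \<bullet> p s\<bar> \<le> M * (\<epsilon> * Vp) + (M * (\<epsilon> * Vq)) * Rp"
    using abs_inner_le_mult[OF na1(1) nvp] abs_inner_le_mult[OF nB np] by linarith
  from abs_mult_le_mult[OF ng this]
  have e2: "\<bar>\<gamma> s * (a1 (q s) (\<phi> s) \<bullet> vp s + B1 (q s, \<phi> s) (vq s, 0) \<bullet> p s)\<bar>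
      \<le> Rg * (M * (\<epsilon> * Vp) + (M * (\<epsilon> * Vq)) * Rp)" .
  have e3: "\<bar>K1 (q s, \<phi> s) (vq s, 0) * (\<gamma> s)\<^sup>2\<bar> \<le> (M * (\<epsilon> * Vq)) * Rg\<^sup>2"
    by (rule abs_mult_le_mult[OF nK]) (use g2 in simp)
  have "\<bar>2 * \<gamma> s * v\<gamma> s\<bar> \<le> 2 * Rg * (\<epsilon> * DG)"
    using abs_mult_le_mult[OF ng nvg] by (simp add: abs_mult)
  from abs_mult_le_mult[OF na1(2) this]
  have e4: "\<bar>h1 (q s) (\<phi> s) * (2 * \<gamma> s * v\<gamma> s)\<bar> \<le> M * (2 * Rg * (\<epsilon> * DG))" .
  have "\<bar>slow_dG s\<bar> \<le> (\<epsilon> * DG) * (M * Rp) + Rg * (M * (\<epsilon> * Vp) + (M * (\<epsilon> * Vq)) * Rp)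
      + 1/2 * ((M * (\<epsilon> * Vq)) * Rg\<^sup>2 + M * (2 * Rg * (\<epsilon> * DG))) + M * (\<epsilon> * Vq)"
    unfolding slow_dG_def by (rule abs_sum5_le[OF e1 e2 e3 e4 nW])
  also have "\<dots> = \<epsilon> * KE" unfolding KE_def by (simp add: algebra_simps)
  finally show ?thesis .
qed

lemma dOm_bound:
  assumes s: "s \<in> T" and e: "err s < \<delta>"
  shows "\<bar>dOm s\<bar> \<le> \<epsilon> * KOm"
proof -
  have x: "q s \<in> S" and np: "norm (p s) \<le> Rp" and ng: "\<bar>\<gamma> s\<bar> \<le> Rg" using in_tube[OF s e] by auto
  note bnd = bounds_in_tube[OF s e]
  note pb = pert_bounds[OF x less_imp_le[OF \<epsilon>_pos] \<epsilon>_le_1, of "\<phi> s"]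
  have nvp: "norm (vp s) \<le> \<epsilon> * Vp" unfolding vp_def using bnd(2) \<epsilon>_pos by (simp add: mult_left_mono)
  have nvg: "\<bar>v\<gamma> s\<bar> \<le> \<epsilon> * DG" unfolding v\<gamma>_def using bnd(3) \<epsilon>_pos by (simp add: abs_mult mult_left_mono)
  have "\<epsilon> * Vq \<le> Vq" using mult_left_le_one_le[OF constants_nonneg(8) less_imp_le[OF \<epsilon>_pos] \<epsilon>_le_1] .
  then have nv: "norm (vq s, Om s) \<le> Vq + VOm" using norm_Pair_le[of "vq s" "Om s"] bnd(1,5) by simp
  have nB: "norm (\<epsilon> *\<^sub>R B1 (q s, \<phi> s) (vq s, Om s)) \<le> \<epsilon> * (M * (Vq + VOm))"
    using norm_blinfun_apply_le[OF conjunct2[OF bB[OF x]] nv] \<epsilon>_pos by (simp add: mult_left_mono)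
  have nK: "\<bar>\<epsilon> * K1 (q s, \<phi> s) (vq s, Om s)\<bar> \<le> \<epsilon> * (M * (Vq + VOm))"
    using norm_blinfun_apply_le[OF _ nv, of "K1 (q s, \<phi> s)"] bK[OF x] \<epsilon>_pos
    by (simp add: abs_mult mult_left_mono)
  have nA: "norm (A1 (q s) (vq s)) \<le> M * (\<epsilon> * Vq)" "norm (H1 (q s) (vq s)) \<le> M * (\<epsilon> * Vq)"
    using norm_blinfun_apply_le[OF _ bnd(1)] bA[OF x] bH[OF x] by blast+
  have o1: "\<bar>pert \<epsilon> a0 a1 (q s) (\<phi> s) \<bullet> vp s\<bar> \<le> 2 * M * (\<epsilon> * Vp)" by (rule abs_inner_le_mult[OF pb(1) nvp])
  have "norm (A1 (q s) (vq s) + \<epsilon> *\<^sub>R B1 (q s, \<phi> s) (vq s, Om s)) \<le> M * (\<epsilon> * Vq) + \<epsilon> * (M * (Vq + VOm))"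
    using norm_triangle_ineq[of "A1 (q s) (vq s)"] nA(1) nB by (smt (verit))
  from abs_inner_le_mult[OF this np]
  have o2: "\<bar>(A1 (q s) (vq s) + \<epsilon> *\<^sub>R B1 (q s, \<phi> s) (vq s, Om s)) \<bullet> p s\<bar>
      \<le> (M * (\<epsilon> * Vq) + \<epsilon> * (M * (Vq + VOm))) * Rp" .
  have "\<bar>H1 (q s) (vq s) + \<epsilon> * K1 (q s, \<phi> s) (vq s, Om s)\<bar> \<le> M * (\<epsilon> * Vq) + \<epsilon> * (M * (Vq + VOm))"
    using nA(2) nK by (simp add: abs_le_iff)
  from abs_mult_le_mult[OF this ng]
  have o3: "\<bar>(H1 (q s) (vq s) + \<epsilon> * K1 (q s, \<phi> s) (vq s, Om s)) * \<gamma> s\<bar>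
      \<le> (M * (\<epsilon> * Vq) + \<epsilon> * (M * (Vq + VOm))) * Rg" .
  have o4: "\<bar>pert \<epsilon> h0 h1 (q s) (\<phi> s) * v\<gamma> s\<bar> \<le> 2 * M * (\<epsilon> * DG)" by (rule abs_mult_le_mult[OF pb(2) nvg])
  have "\<bar>dOm s\<bar> \<le> 2 * M * (\<epsilon> * Vp) + (M * (\<epsilon> * Vq) + \<epsilon> * (M * (Vq + VOm))) * Rp
       + (M * (\<epsilon> * Vq) + \<epsilon> * (M * (Vq + VOm))) * Rg + 2 * M * (\<epsilon> * DG)"
    unfolding dOm_def by (rule abs_sum4_le[OF o1 o2 o3 o4])
  also have "\<dots> = \<epsilon> * KOm" unfolding KOm_def by (simp add: algebra_simps)
  finally show ?thesis .
qed

definition "dW s = v\<gamma> s + \<epsilon> * ((dG s * Om s - G s * dOm s) / (Om s * Om s))"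

lemma W_deriv:
  assumes s: "s \<in> T" and e: "err s < \<delta>"
  shows "(W has_vector_derivative dW s) (at s within T)"
proof -
  have "Om s \<noteq> 0" using bounds_in_tube(4)[OF s e] C_pos by simp
  with G_Om_derivatives[OF s e]
  have "((\<lambda>s. G s / Om s) has_field_derivative (dG s * Om s - G s * dOm s) / (Om s * Om s)) (at s within T)"
    by (intro DERIV_divide) auto
  moreover have "(\<gamma> has_field_derivative v\<gamma> s) (at s within T)"
    unfolding v\<gamma>_def using dphi_full[OF s] has_real_derivative_iff_has_vector_derivative by blast
  ultimately show ?thesis
    unfolding W_def[abs_def] dW_def has_real_derivative_iff_has_vector_derivative[symmetric]
    by (intro DERIV_add DERIV_cmult)
qed

lemma dW_eq:
  assumes s: "s \<in> T" and e: "err s < \<delta>"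
  shows "dW s = \<epsilon> * (slow_dG s / Om s - G s * dOm s / (Om s * Om s))"
  using bounds_in_tube(4)[OF s e] C_pos
  unfolding dW_def dG_eq_slow_plus_fast[OF s e] v\<gamma>_def by (simp add: field_simps)

lemma dW_bound:
  assumes s: "s \<in> T" and e: "err s < \<delta>"
  shows "\<bar>dW s\<bar> \<le> \<epsilon> * \<epsilon> * KW"
proof -
  note bnd = bounds_in_tube[OF s e]
  have Om: "C < Om s" "0 < Om s" using bnd(4) C_pos by auto
  have "\<bar>slow_dG s / Om s\<bar> \<le> \<epsilon> * KE / C"
    using frac_le[OF _ slow_dG_bound[OF s e] C_pos less_imp_le[OF Om(1)]] Om(2)
    by (simp add: order_trans[OF abs_ge_zero slow_dG_bound[OF s e]])
  moreover have "\<bar>G s * dOm s / (Om s * Om s)\<bar> \<le> DG * (\<epsilon> * KOm) / C\<^sup>2"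
  proof -
    have "\<bar>G s * dOm s\<bar> \<le> DG * (\<epsilon> * KOm)" by (rule abs_mult_le_mult[OF bnd(6) dOm_bound[OF s e]])
    moreover have "C\<^sup>2 \<le> Om s * Om s" using Om C_pos by (simp add: power2_eq_square mult_mono)
    ultimately show ?thesis
      using frac_le[of "DG * (\<epsilon> * KOm)" "\<bar>G s * dOm s\<bar>" "C\<^sup>2" "Om s * Om s"] C_pos Om(2)
        constants_nonneg(7) order_trans[OF abs_ge_zero dOm_bound[OF s e]] \<epsilon>_pos
      by (simp add: abs_mult)
  qed
  ultimately have "\<bar>slow_dG s / Om s - G s * dOm s / (Om s * Om s)\<bar> \<le> \<epsilon> * KE / C + DG * (\<epsilon> * KOm) / C\<^sup>2"
    using abs_triangle_ineq4[of "slow_dG s / Om s" "G s * dOm s / (Om s * Om s)"] by linarith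
  also have "\<dots> = \<epsilon> * KW" unfolding KW_def by (simp add: algebra_simps)
  finally have "\<bar>slow_dG s / Om s - G s * dOm s / (Om s * Om s)\<bar> \<le> \<epsilon> * KW" .
  then show ?thesis unfolding dW_eq[OF s e] using \<epsilon>_pos by (simp add: abs_mult mult_left_mono)
qed

lemma G_div_Om_bound:
  assumes s: "s \<in> T" and e: "err s < \<delta>"
  shows "\<bar>G s / Om s\<bar> \<le> DG / C"
proof -
  note bnd = bounds_in_tube[OF s e]
  have "\<bar>G s / Om s\<bar> = \<bar>G s\<bar> / Om s" using bnd(4) C_pos by simp
  also have "\<dots> \<le> DG / C" by (rule frac_le[OF constants_nonneg(7) bnd(6) C_pos]) (use bnd(4) in simp)
  finally show ?thesis .
qed

lemma gamma_estimate:
  assumes t: "t \<in> T" and good: "\<forall>s\<in>{0..t}. err s < \<delta>"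
  shows "\<bar>\<gamma> t - \<mu>\<bar> \<le> \<epsilon> * Kgam"
proof -
  have sub: "{0..t} \<subseteq> T" using t by auto
  have "norm (W t - W 0) \<le> (\<epsilon> * \<epsilon> * KW) * t"
  proof (rule norm_increment_le_const)
    fix s assume s: "s \<in> {0..t}"
    show "(W has_vector_derivative dW s) (at s within {0..t})"
      using W_deriv s sub good has_vector_derivative_within_subset by blast
    show "norm (dW s) \<le> \<epsilon> * \<epsilon> * KW" using dW_bound s sub good by auto
  qed (use t in simp)
  also have "\<dots> \<le> \<epsilon> * KW"
    using mult_left_mono[OF eps_mult_le_1[OF t], of "\<epsilon> * KW"] KW_nonneg \<epsilon>_pos by (simp add: ac_simps)
  finally have W: "\<bar>W t - W 0\<bar> \<le> \<epsilon> * KW" by simp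
  have "0 \<in> {0..t}" "t \<in> {0..t}" using t by auto
  then have "\<bar>G t / Om t\<bar> \<le> DG / C" "\<bar>G 0 / Om 0\<bar> \<le> DG / C"
    using G_div_Om_bound good sub by blast+
  then have Gt: "\<bar>\<epsilon> * (G t / Om t)\<bar> \<le> \<epsilon> * (DG / C)" and G0: "\<bar>\<epsilon> * (G 0 / Om 0)\<bar> \<le> \<epsilon> * (DG / C)"
    using mult_left_mono[of _ _ \<epsilon>] \<epsilon>_pos by (simp_all only: abs_mult abs_of_pos)
  have "\<gamma> t - \<mu> = (W t - W 0) - \<epsilon> * (G t / Om t) + \<epsilon> * (G 0 / Om 0)"
    unfolding W_def using init by simp
  then have "\<bar>\<gamma> t - \<mu>\<bar> \<le> \<epsilon> * KW + \<epsilon> * (DG / C) + \<epsilon> * (DG / C)"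
    using W Gt G0 abs_triangle_ineq[of "W t - W 0 - \<epsilon> * (G t / Om t)" "\<epsilon> * (G 0 / Om 0)"]
      abs_triangle_ineq4[of "W t - W 0" "\<epsilon> * (G t / Om t)"] by linarith
  then show ?thesis unfolding Kgam_def by (simp add: algebra_simps)
qed

lemma qp_deriv_diff_bound:
  assumes s: "s \<in> T" and e: "err s < \<delta>" and g: "\<bar>\<gamma> s - \<mu>\<bar> \<le> \<epsilon> * Kgam"
  defines "E \<equiv> norm (q s - Q s) + norm (p s - P s)"
  shows "norm (vq s - \<epsilon> *\<^sub>R (P s + \<mu> *\<^sub>R a0 (Q s))) \<le> \<epsilon> * (Lc * E + \<epsilon> * K2)"
    and "norm (vp s - (- \<epsilon>) *\<^sub>R grad_avg s) \<le> \<epsilon> * (Lc * E + \<epsilon> * K2)"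
proof -
  note nn = constants_nonneg error_constants_nonneg M_nonneg
  have \<epsilon>: "0 \<le> \<epsilon>" using \<epsilon>_pos by simp
  have Lc: "\<bar>\<mu>\<bar> * M \<le> Lc" "1 \<le> Lc" "Lq \<le> Lc" unfolding Lc_def using nn by auto
  have LcE: "Lc * E = Lc * norm (q s - Q s) + Lc * norm (p s - P s)" unfolding E_def by (rule distrib_left)
  have gM: "M * \<bar>\<gamma> s - \<mu>\<bar> \<le> \<epsilon> * (M * Kgam)" and gL: "Lg * \<bar>\<gamma> s - \<mu>\<bar> \<le> \<epsilon> * (Lg * Kgam)"
    using mult_left_mono[OF g M_nonneg] mult_left_mono[OF g constants_nonneg(6)] by (simp_all only: mult.left_commute)
  have "M * Kgam + Rg * M \<le> K2" "Lg * Kgam + DG \<le> K2"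
    unfolding K2_def using nn by (auto simp: distrib_right)
  then have K2: "\<epsilon> * (M * Kgam) + \<epsilon> * (Rg * M) \<le> \<epsilon> * K2" "\<epsilon> * (Lg * Kgam) + \<epsilon> * DG \<le> \<epsilon> * K2"
    using mult_left_mono[OF _ \<epsilon>] by (simp_all only: distrib_left[symmetric])
  have "norm (p s - P s) + M * \<bar>\<gamma> s - \<mu>\<bar> + \<bar>\<mu>\<bar> * M * norm (q s - Q s) + \<epsilon> * (Rg * M)
      \<le> Lc * E + \<epsilon> * K2"
    using gM K2(1) mult_right_mono[OF Lc(1) norm_ge_zero[of "q s - Q s"]]
      mult_right_mono[OF Lc(2) norm_ge_zero[of "p s - P s"]] unfolding LcE by linarith
  from order_trans[OF q_deriv_diff_bound[OF s e] mult_left_mono[OF this \<epsilon>]]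
  show "norm (vq s - \<epsilon> *\<^sub>R (P s + \<mu> *\<^sub>R a0 (Q s))) \<le> \<epsilon> * (Lc * E + \<epsilon> * K2)"
    unfolding vq_def .
  have "Lq * norm (q s - Q s) + (\<bar>\<mu>\<bar> * M) * norm (p s - P s) + Lg * \<bar>\<gamma> s - \<mu>\<bar> + \<epsilon> * DG
      \<le> Lc * E + \<epsilon> * K2"
    using gL K2(2) mult_right_mono[OF Lc(3) norm_ge_zero[of "q s - Q s"]]
      mult_right_mono[OF Lc(1) norm_ge_zero[of "p s - P s"]] unfolding LcE by linarith
  from order_trans[OF grad_diff_bound[OF s e] this]
  have "\<epsilon> * norm (grad_full s - grad_avg s) \<le> \<epsilon> * (Lc * E + \<epsilon> * K2)" by (rule mult_left_mono[OF _ \<epsilon>])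
  moreover have "norm (vp s - (- \<epsilon>) *\<^sub>R grad_avg s) = \<epsilon> * norm (grad_full s - grad_avg s)"
    unfolding vp_def using \<epsilon>_pos by (simp add: scaleR_diff_right[symmetric] norm_minus_commute)
  ultimately show "norm (vp s - (- \<epsilon>) *\<^sub>R grad_avg s) \<le> \<epsilon> * (Lc * E + \<epsilon> * K2)" by simp
qed

lemma qp_estimate:
  assumes t: "t \<in> T" and good: "\<forall>s\<in>{0..t}. err s < \<delta>"
  shows "norm (q t - Q t) + norm (p t - P t) \<le> 2 * \<epsilon> * K2 * exp (2 * Lc)"
proof -
  define E where "E s = norm (q s - Q s) + norm (p s - P s)" for s
  define b where "b s = \<epsilon> * (Lc * E s + \<epsilon> * K2)" for s
  have sub: "{0..t} \<subseteq> T" using t by auto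
  have cE: "continuous_on {0..t} E"
    unfolding E_def using continuous_on_solutions sub by (auto intro!: continuous_intros intro: continuous_on_subset)
  have "E s \<le> 2 * \<epsilon> * K2 + (2 * \<epsilon> * Lc) * integral {0..s} E" if s: "s \<in> {0..t}" for s
  proof -
    have ss: "{0..s} \<subseteq> T" using s sub by auto
    have cb: "continuous_on {0..s} b" unfolding b_def using cE s by (auto intro!: continuous_intros intro: continuous_on_subset)
    have bnd: "norm (vq x - \<epsilon> *\<^sub>R (P x + \<mu> *\<^sub>R a0 (Q x))) \<le> b x" "norm (vp x - (- \<epsilon>) *\<^sub>R grad_avg x) \<le> b x"
      if x: "x \<in> {0..s}" for x
      using qp_deriv_diff_bound[of x] gamma_estimate[of x] x s good ss unfolding b_def E_def by auto
    have "norm ((q s - Q s) - (q 0 - Q 0)) \<le> integral {0..s} b"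
    proof (rule norm_increment_le_integral[OF _ _ cb])
      fix x assume x: "x \<in> {0..s}"
      show "((\<lambda>s. q s - Q s) has_vector_derivative vq x - \<epsilon> *\<^sub>R (P x + \<mu> *\<^sub>R a0 (Q x))) (at x within {0..s})"
        using has_vector_derivative_diff[OF q_deriv Q_deriv, of x] x ss unfolding vq_def
        by (auto intro: has_vector_derivative_within_subset)
    qed (use s bnd in auto)
    moreover have "norm ((p s - P s) - (p 0 - P 0)) \<le> integral {0..s} b"
    proof (rule norm_increment_le_integral[OF _ _ cb])
      fix x assume x: "x \<in> {0..s}"
      then have xT: "x \<in> T" using ss by auto
      show "((\<lambda>s. p s - P s) has_vector_derivative vp x - (- \<epsilon>) *\<^sub>R grad_avg x) (at x within {0..s})"
        using has_vector_derivative_diff[OF conjunct2[OF grad_full[OF xT]] conjunct2[OF grad_avg[OF xT]]] ss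
        unfolding vp_def by (auto intro: has_vector_derivative_within_subset)
    qed (use s bnd in auto)
    ultimately have "E s \<le> 2 * integral {0..s} b" using init unfolding E_def by simp
    also have "\<dots> = 2 * (\<epsilon> * Lc * integral {0..s} E + \<epsilon> * (\<epsilon> * K2) * s)"
      unfolding b_def by (subst integral_affine_comp) (use s cE in \<open>auto intro: continuous_on_subset\<close>)
    also have "\<dots> \<le> 2 * \<epsilon> * K2 + (2 * \<epsilon> * Lc) * integral {0..s} E"
      using mult_left_mono[OF eps_mult_le_1, of s "\<epsilon> * K2"] s ss error_constants_nonneg \<epsilon>_pos
      by (auto simp: algebra_simps)
    finally show ?thesis .
  qed
  from gronwall_integral[OF _ cE _ this]
  have "E t \<le> 2 * \<epsilon> * K2 * exp (2 * \<epsilon> * Lc * t)" using t \<epsilon>_pos error_constants_nonneg by simp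
  also have "\<dots> \<le> 2 * \<epsilon> * K2 * exp (2 * Lc)"
    using mult_left_mono[OF eps_mult_le_1[OF t], of "2 * Lc"] error_constants_nonneg \<epsilon>_pos
    by (intro mult_left_mono) (auto simp: ac_simps)
  finally show ?thesis unfolding E_def .
qed

lemma err_estimate:
  assumes t: "t \<in> T" and good: "\<forall>s\<in>{0..t}. err s < \<delta>"
  shows "err t \<le> \<epsilon> * Kerr"
  using gamma_estimate[OF t good] qp_estimate[OF t good]
  unfolding err_def Kerr_def by (simp add: algebra_simps)

text \<open>For small \<open>\<epsilon>\<close> the estimate is strictly better than the a priori bound \<open>err < \<delta>\<close> it was
  derived from, so by continuity the solution never leaves the \<open>\<delta>\<close>-tube.\<close>

lemma error_bound:
  assumes small: "\<epsilon> * Kerr < \<delta> / 2"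
  shows "\<forall>t\<in>T. err t \<le> \<epsilon> * Kerr"
proof -
  have tube: "\<forall>t\<in>T. err t \<le> \<delta> / 2"
  proof (rule continuity_argument[OF continuous_on_err])
    show "err 0 < \<delta> / 2" using err_0 \<delta>_pos by simp
    fix t assume "t \<in> T" "\<forall>s\<in>{0..t}. err s \<le> \<delta> / 2"
    then show "err t < \<delta> / 2" using err_estimate[of t] small \<delta>_pos by force
  qed
  show ?thesis
  proof
    fix t assume t: "t \<in> T"
    then have "\<forall>s\<in>{0..t}. err s < \<delta>" using tube \<delta>_pos by force
    then show "err t \<le> \<epsilon> * Kerr" by (rule err_estimate[OF t])
  qed
qed

end

context averaging_data
begin

lemma uniform_error_bound:
  "\<exists>\<epsilon>0>0. \<exists>C0. \<forall>\<epsilon> Q P q \<phi> p \<gamma>.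
     0 < \<epsilon> \<and> \<epsilon> < \<epsilon>0
   \<and> (\<forall>(x, y, g)\<in>D. \<forall>\<psi>. pert \<epsilon> a0 a1 x \<psi> \<bullet> y + pert \<epsilon> h0 h1 x \<psi> * g > C)
   \<and> avg_sol \<epsilon> a0 h0 U0 Q P \<mu> \<and> Q 0 = Q0 \<and> P 0 = P0
   \<and> (\<forall>t\<in>{0..1/\<epsilon>}. (Q t, P t, \<mu>) \<in> Dd)
   \<and> full_sol \<epsilon> a0 a1 h0 h1 U0 U1 q \<phi> p \<gamma> \<and> q 0 = Q0 \<and> p 0 = P0 \<and> \<gamma> 0 = \<mu>
   \<longrightarrow> (\<forall>t\<in>{0..1/\<epsilon>}. \<bar>\<gamma> t - \<mu>\<bar> + norm (q t - Q t) + norm (p t - P t) < C0 * \<epsilon>)"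
proof (rule exI[of _ "min 1 (\<delta> / (2 * (Kerr + 1)))"], intro conjI exI[of _ "Kerr + 1"] allI impI)
  have K: "0 \<le> Kerr" by (rule error_constants_nonneg)
  then show "0 < min 1 (\<delta> / (2 * (Kerr + 1)))" using \<delta>_pos by simp
  fix \<epsilon> Q P q \<phi> p \<gamma>
  assume H: "0 < \<epsilon> \<and> \<epsilon> < min 1 (\<delta> / (2 * (Kerr + 1)))
   \<and> (\<forall>(x, y, g)\<in>D. \<forall>\<psi>. pert \<epsilon> a0 a1 x \<psi> \<bullet> y + pert \<epsilon> h0 h1 x \<psi> * g > C)
   \<and> avg_sol \<epsilon> a0 h0 U0 Q P \<mu> \<and> Q 0 = Q0 \<and> P 0 = P0
   \<and> (\<forall>t\<in>{0..1/\<epsilon>}. (Q t, P t, \<mu>) \<in> Dd)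
   \<and> full_sol \<epsilon> a0 a1 h0 h1 U0 U1 q \<phi> p \<gamma> \<and> q 0 = Q0 \<and> p 0 = P0 \<and> \<gamma> 0 = \<mu>"
  interpret sol: averaging_solution a0 a1 h0 U0 h1 U1 D Dd \<delta> C \<mu> M P0 A1 A2 H1 V1 H2 V2 B1 K1 W1
    \<epsilon> Q P q p \<phi> \<gamma>
    by (intro averaging_solution.intro averaging_data_axioms averaging_solution_axioms.intro) (use H in auto)
  have "\<epsilon> * (Kerr + 1) < \<delta> / 2" using H K by (auto simp: field_simps)
  moreover have "\<epsilon> * Kerr \<le> \<epsilon> * (Kerr + 1)" using H by simp
  ultimately have "\<forall>t\<in>{0..1/\<epsilon>}. sol.err t \<le> \<epsilon> * Kerr" by (intro sol.error_bound) linarith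
  then show "\<forall>t\<in>{0..1/\<epsilon>}. \<bar>\<gamma> t - \<mu>\<bar> + norm (q t - Q t) + norm (p t - P t) < (Kerr + 1) * \<epsilon>"
    using H unfolding sol.err_def by (auto simp: algebra_simps intro: order_le_less_trans)
qed

end
lemma averaging_data_from_C3_bounds:
  fixes a0 :: "'a::euclidean_space \<Rightarrow> 'a" and a1 :: "'a \<Rightarrow> real \<Rightarrow> 'a"
    and h0 U0 :: "'a \<Rightarrow> real" and h1 U1 :: "'a \<Rightarrow> real \<Rightarrow> real"
  assumes "C3_bounded_on (fst ` D) a0" "C3_bounded_on (fst ` D) h0" "C3_bounded_on (fst ` D) U0"
    "C3_bounded_on (fst ` D \<times> UNIV) (\<lambda>(q, \<phi>). a1 q \<phi>)"
    "C3_bounded_on (fst ` D \<times> UNIV) (\<lambda>(q, \<phi>). h1 q \<phi>)"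
    "C3_bounded_on (fst ` D \<times> UNIV) (\<lambda>(q, \<phi>). U1 q \<phi>)"
    and "0 < \<delta>" "0 < C" "\<forall>x\<in>Dd. ball x \<delta> \<subseteq> D" "Dd \<subseteq> D"
  obtains M A1 A2 H1 V1 H2 V2 B1 K1 W1
  where "averaging_data a0 a1 h0 U0 h1 U1 D Dd \<delta> C M A1 A2 H1 V1 H2 V2 B1 K1 W1"
proof -
  obtain A1 A2 Ba where A: "\<And>x. x \<in> fst ` D \<Longrightarrow> (a0 has_derivative blinfun_apply (A1 x)) (at x)"
    "\<And>x. x \<in> fst ` D \<Longrightarrow> (A1 has_derivative blinfun_apply (A2 x)) (at x)" "0 \<le> Ba"
    "\<And>x. x \<in> fst ` D \<Longrightarrow> norm (a0 x) \<le> Ba \<and> norm (A1 x) \<le> Ba \<and> norm (A2 x) \<le> Ba"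
    using C3_bounded_onE[OF assms(1)] by metis
  obtain H1 H2 Bh where H: "\<And>x. x \<in> fst ` D \<Longrightarrow> (h0 has_derivative blinfun_apply (H1 x)) (at x)"
    "\<And>x. x \<in> fst ` D \<Longrightarrow> (H1 has_derivative blinfun_apply (H2 x)) (at x)" "0 \<le> Bh"
    "\<And>x. x \<in> fst ` D \<Longrightarrow> norm (h0 x) \<le> Bh \<and> norm (H1 x) \<le> Bh \<and> norm (H2 x) \<le> Bh"
    using C3_bounded_onE[OF assms(2)] by metis
  obtain V1 V2 Bv where V: "\<And>x. x \<in> fst ` D \<Longrightarrow> (U0 has_derivative blinfun_apply (V1 x)) (at x)"
    "\<And>x. x \<in> fst ` D \<Longrightarrow> (V1 has_derivative blinfun_apply (V2 x)) (at x)" "0 \<le> Bv"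
    "\<And>x. x \<in> fst ` D \<Longrightarrow> norm (U0 x) \<le> Bv \<and> norm (V1 x) \<le> Bv \<and> norm (V2 x) \<le> Bv"
    using C3_bounded_onE[OF assms(3)] by metis
  obtain B1 Bb where B: "\<And>z. z \<in> fst ` D \<times> UNIV \<Longrightarrow> (case_prod a1 has_derivative blinfun_apply (B1 z)) (at z)"
    "0 \<le> Bb" "\<And>z. z \<in> fst ` D \<times> UNIV \<Longrightarrow> norm (case_prod a1 z) \<le> Bb \<and> norm (B1 z) \<le> Bb"
    using C3_bounded_onE[OF assms(4)] by metis
  obtain K1 Bk where K: "\<And>z. z \<in> fst ` D \<times> UNIV \<Longrightarrow> (case_prod h1 has_derivative blinfun_apply (K1 z)) (at z)"
    "0 \<le> Bk" "\<And>z. z \<in> fst ` D \<times> UNIV \<Longrightarrow> norm (case_prod h1 z) \<le> Bk \<and> norm (K1 z) \<le> Bk"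
    using C3_bounded_onE[OF assms(5)] by metis
  obtain W1 Bw where W: "\<And>z. z \<in> fst ` D \<times> UNIV \<Longrightarrow> (case_prod U1 has_derivative blinfun_apply (W1 z)) (at z)"
    "0 \<le> Bw" "\<And>z. z \<in> fst ` D \<times> UNIV \<Longrightarrow> norm (case_prod U1 z) \<le> Bw \<and> norm (W1 z) \<le> Bw"
    using C3_bounded_onE[OF assms(6)] by metis
  define M where "M = Ba + Bh + Bv + Bb + Bk + Bw"
  have le: "Ba \<le> M" "Bh \<le> M" "Bv \<le> M" "Bb \<le> M" "Bk \<le> M" "Bw \<le> M"
    unfolding M_def using A(3) H(3) V(3) B(2) K(2) W(2) by linarith+
  show ?thesis
  proof (rule that, unfold_locales)
    fix x assume x: "x \<in> fst ` D"
    show "(a0 has_derivative blinfun_apply (A1 x)) (at x)" "(A1 has_derivative blinfun_apply (A2 x)) (at x)"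
      "(h0 has_derivative blinfun_apply (H1 x)) (at x)" "(H1 has_derivative blinfun_apply (H2 x)) (at x)"
      "(U0 has_derivative blinfun_apply (V1 x)) (at x)" "(V1 has_derivative blinfun_apply (V2 x)) (at x)"
      using A(1,2) H(1,2) V(1,2) x by blast+
    show "norm (a0 x) \<le> M \<and> norm (A1 x) \<le> M \<and> norm (A2 x) \<le> M"
      using A(4)[OF x] le(1) by linarith
    show "\<bar>h0 x\<bar> \<le> M \<and> norm (H1 x) \<le> M \<and> norm (H2 x) \<le> M"
      using H(4)[OF x] le(2) by auto
    show "\<bar>U0 x\<bar> \<le> M \<and> norm (V1 x) \<le> M \<and> norm (V2 x) \<le> M"
      using V(4)[OF x] le(3) by auto
    fix y :: real
    have xy: "(x, y) \<in> fst ` D \<times> UNIV" using x by simp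
    show "(case_prod a1 has_derivative blinfun_apply (B1 (x, y))) (at (x, y))"
      "(case_prod h1 has_derivative blinfun_apply (K1 (x, y))) (at (x, y))"
      "(case_prod U1 has_derivative blinfun_apply (W1 (x, y))) (at (x, y))"
      using B(1) K(1) W(1) xy by blast+
    show "norm (a1 x y) \<le> M \<and> norm (B1 (x, y)) \<le> M" using B(3)[OF xy] le(4) by auto
    show "\<bar>h1 x y\<bar> \<le> M \<and> norm (K1 (x, y)) \<le> M" using K(3)[OF xy] le(5) by auto
    show "\<bar>U1 x y\<bar> \<le> M \<and> norm (W1 (x, y)) \<le> M" using W(3)[OF xy] le(6) by auto
  qed (use A(3) le(1) assms(7-10) in auto)
qed

theorem theorem5p2:
  fixes a0 :: "'a::euclidean_space \<Rightarrow> 'a" and a1 :: "'a \<Rightarrow> real \<Rightarrow> 'a"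
    and h0 U0 :: "'a \<Rightarrow> real" and h1 U1 :: "'a \<Rightarrow> real \<Rightarrow> real"
    and D D\<delta> :: "('a \<times> 'a \<times> real) set"
    and \<delta> C \<mu> :: real and Q0 P0 :: 'a
  assumes D_dom: "open D" "connected D"
    and Dd_dom: "open D\<delta>" "connected D\<delta>" "D\<delta> \<subseteq> D"
    and \<delta>_pos: "\<delta> > 0"
    and nbhd: "\<forall>x\<in>D\<delta>. ball x \<delta> \<subseteq> D"
    and periodic: "\<forall>q\<in>fst ` D. \<forall>\<phi>. a1 q (\<phi> + 2*pi) = a1 q \<phi> \<and>
                      h1 q (\<phi> + 2*pi) = h1 q \<phi> \<and> U1 q (\<phi> + 2*pi) = U1 q \<phi>"
    and mean0: "\<forall>q\<in>fst ` D. integral {0..2*pi} (a1 q) = 0 \<and>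
                   integral {0..2*pi} (h1 q) = 0 \<and> integral {0..2*pi} (U1 q) = 0"
    and C3: "C3_bounded_on (fst ` D) a0" "C3_bounded_on (fst ` D) h0"
            "C3_bounded_on (fst ` D) U0"
            "C3_bounded_on (fst ` D \<times> UNIV) (\<lambda>(q, \<phi>). a1 q \<phi>)"
            "C3_bounded_on (fst ` D \<times> UNIV) (\<lambda>(q, \<phi>). h1 q \<phi>)"
            "C3_bounded_on (fst ` D \<times> UNIV) (\<lambda>(q, \<phi>). U1 q \<phi>)"
    and C_pos: "C > 0"
  shows "\<exists>\<epsilon>0>0. \<exists>C0. \<forall>\<epsilon> Q P q \<phi> p \<gamma>.
           0 < \<epsilon> \<and> \<epsilon> < \<epsilon>0
         \<and> (\<forall>(x, y, g)\<in>D. \<forall>\<psi>. pert \<epsilon> a0 a1 x \<psi> \<bullet> y + pert \<epsilon> h0 h1 x \<psi> * g > C)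
         \<and> avg_sol \<epsilon> a0 h0 U0 Q P \<mu> \<and> Q 0 = Q0 \<and> P 0 = P0
         \<and> (\<forall>t\<in>{0..1/\<epsilon>}. (Q t, P t, \<mu>) \<in> D\<delta>)
         \<and> full_sol \<epsilon> a0 a1 h0 h1 U0 U1 q \<phi> p \<gamma> \<and> q 0 = Q0 \<and> p 0 = P0 \<and> \<gamma> 0 = \<mu>
         \<longrightarrow> (\<forall>t\<in>{0..1/\<epsilon>}. \<bar>\<gamma> t - \<mu>\<bar> + norm (q t - Q t) + norm (p t - P t) < C0 * \<epsilon>)"
proof -
  obtain M A1 A2 H1 V1 H2 V2 B1 K1 W1
    where "averaging_data a0 a1 h0 U0 h1 U1 D D\<delta> \<delta> C M A1 A2 H1 V1 H2 V2 B1 K1 W1"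
    using averaging_data_from_C3_bounds[OF C3 \<delta>_pos C_pos nbhd Dd_dom(3)] by blast
  from averaging_data.uniform_error_bound[OF this] show ?thesis .
qed

end
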